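(* Let $N,l$ be positive integers, $m=2l$, $a=\begin{bmatrix}0&1\\-1&0\end{bmatrix}$, and for $z\in\mathbb{R}^l$ let $S(z)=\mathrm{diag}(z)\otimes a$. Let $\omega=\mathrm{col}(\omega_{01},\dots,\omega_{0l})\in\mathbb{R}^l$ with $\omega_{0k}>0$ for all $k$, and consider the leader system $\dot v=S(\omega)v$, $v\in\mathbb{R}^m$. Let $\bar{\mathcal G}$ be a digraph with node set $\{0,1,\dots,N\}$ such that $\bar{\mathcal G}$ contains a spanning tree rooted at node $0$ and the subgraph $\mathcal G$ induced on $\{1,\dots,N\}$ (obtained by removing all edges between node $0$ and the other nodes) is undirected. For $i=1,\dots,N$ let $\bar{\mathcal N}_i=\{j:(j,i)\text{ is an edge of }\bar{\mathcal G}\}$. Consider the dynamic compensator, for $i=1,\dots,N$, $$\dot\eta_i=S(\omega_i)\eta_i+\mu_1 e_{vi},\qquad \dot\omega_i=\mu_2\,\phi(e_{vi})\,\eta_i,\qquad e_{vi}=\sum_{j\in\bar{\mathcal N}_i}(\eta_j-\eta_i),$$ where $\eta_0=v$, $\eta_i\in\mathbb{R}^m$, $\omega_i\in\mathbb{R}^l$, and $\mu_1,\mu_2>0$, and where for $x\in\mathbb{R}^m$, $\phi(x)\in\mathbb{R}^{l\times m}$ is the matrix whose $k$-th row has entry $-x_{2k}$ in column $2k-1$, $x_{2k-1}$ in column $2k$, and zeros elsewhere. Let $\eta=\mathrm{col}(\eta_1,\dots,\eta_N)$, $\tilde\eta_i=\eta_i-v$, $\tilde\eta=\mathrm{col}(\tilde\eta_1,\dots,\tilde\eta_N)$,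 $\tilde\omega_i=\omega_i-\omega$, $\tilde\omega=\mathrm{col}(\tilde\omega_1,\dots,\tilde\omega_N)$, and $S_d(\tilde\omega)=\mathrm{block\,diag}(S(\tilde\omega_1),\dots,S(\tilde\omega_N))$. Then for any $v(0)$, any $\eta(0)$ and $\omega_i(0)$, $i=1,\dots,N$, and any $\mu_1>0$, $\mu_2>0$, the solutions $\eta(t)$ and $\omega_i(t)$ exist and are bounded for all $t\ge0$, and $$\lim_{t\to\infty}\tilde\eta(t)=0,\qquad \lim_{t\to\infty}\dot{\tilde\omega}(t)=0,\qquad \lim_{t\to\infty}S_d(\tilde\omega(t))\eta(t)=0.$$
   Context: $\otimes$ is the Kronecker product; $\mathrm{col}(\cdot)$ stacks vectors into a column; $\mathrm{block\,diag}$ forms a block-diagonal matrix. The leader system matrix $S(\omega)$ is in the skew-symmetric form $\mathrm{diag}(\omega)\otimes a$ (all eigenvalues semi-simple with zero real part), but the vector $\omega$ is not used by the compensator. *)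

theory Defs
  imports "HOL-Analysis.Analysis"
begin

text \<open>Vectors in R^n are represented as functions nat => real, indexed 1..n;
  matrices as functions nat => nat => real, indexed 1-based.\<close>

definition kron :: "(nat \<Rightarrow> nat \<Rightarrow> real) \<Rightarrow> nat \<Rightarrow> nat \<Rightarrow> (nat \<Rightarrow> nat \<Rightarrow> real) \<Rightarrow> nat \<Rightarrow> nat \<Rightarrow> real" where
  "kron A r s B i j = A ((i - 1) div r + 1) ((j - 1) div s + 1) * B ((i - 1) mod r + 1) ((j - 1) mod s + 1)"
  \<comment> \<open>Kronecker product A \<otimes> B where B is an r x s matrix\<close>

definition diagm :: "(nat \<Rightarrow> real) \<Rightarrow> nat \<Rightarrow> nat \<Rightarrow> real" where
  "diagm z i j = (if i = j then z i else 0)"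

definition amat :: "nat \<Rightarrow> nat \<Rightarrow> real" where
  "amat i j = (if i = 1 \<and> j = 2 then 1 else if i = 2 \<and> j = 1 then -1 else 0)"

definition Smat :: "(nat \<Rightarrow> real) \<Rightarrow> nat \<Rightarrow> nat \<Rightarrow> real" where
  "Smat z = kron (diagm z) 2 2 amat"

definition mulv :: "(nat \<Rightarrow> nat \<Rightarrow> real) \<Rightarrow> nat \<Rightarrow> (nat \<Rightarrow> real) \<Rightarrow> nat \<Rightarrow> real" where
  "mulv M n x i = (\<Sum>j = 1..n. M i j * x j)"

definition phi :: "(nat \<Rightarrow> real) \<Rightarrow> nat \<Rightarrow> nat \<Rightarrow> real" where
  "phi x k j = (if j = 2 * k - 1 then - x (2 * k) else if j = 2 * k then x (2 * k - 1) else 0)"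

text \<open>Rooted spanning tree (arborescence) of a digraph with vertex set V; an edge (j,i) goes from j to i.\<close>
definition rooted_spanning_tree :: "nat \<Rightarrow> nat set \<Rightarrow> (nat \<times> nat) set \<Rightarrow> bool" where
  "rooted_spanning_tree r V T \<longleftrightarrow> T \<subseteq> V \<times> V \<and> r \<in> V \<and>
     (\<forall>j. (j, r) \<notin> T) \<and>
     (\<forall>i\<in>V. i \<noteq> r \<longrightarrow> (\<exists>!j. (j, i) \<in> T)) \<and>
     (\<forall>i\<in>V. (r, i) \<in> T\<^sup>*)"

definition contains_spanning_tree :: "(nat \<times> nat) set \<Rightarrow> nat set \<Rightarrow> nat \<Rightarrow> bool" where
  "contains_spanning_tree E V r \<longleftrightarrow> (\<exists>T \<subseteq> E. rooted_spanning_tree r V T)"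

definition nbrs :: "(nat \<times> nat) set \<Rightarrow> nat \<Rightarrow> nat \<Rightarrow> nat set" where
  "nbrs E N i = {j \<in> {0..N}. (j, i) \<in> E}"

definition closed_loop ::
  "nat \<Rightarrow> nat \<Rightarrow> (nat \<times> nat) set \<Rightarrow> (nat \<Rightarrow> real) \<Rightarrow> real \<Rightarrow> real \<Rightarrow>
   (real \<Rightarrow> nat \<Rightarrow> real) \<Rightarrow> (nat \<Rightarrow> real \<Rightarrow> nat \<Rightarrow> real) \<Rightarrow> (nat \<Rightarrow> real \<Rightarrow> nat \<Rightarrow> real) \<Rightarrow> bool" where
  "closed_loop N l E w mu1 mu2 v eta om \<longleftrightarrow>
    (let m = 2 * l;
         etab = (\<lambda>j t. if j = 0 then v t else eta j t);
         ev = (\<lambda>i t k. \<Sum>j\<in>nbrs E N i. etab j t k - eta i t k)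
     in (\<forall>t\<ge>0. \<forall>k\<in>{1..m}.
           ((\<lambda>s. v s k) has_real_derivative mulv (Smat w) m (v t) k) (at t within {0..})) \<and>
        (\<forall>i\<in>{1..N}. \<forall>t\<ge>0. \<forall>k\<in>{1..m}.
           ((\<lambda>s. eta i s k) has_real_derivative
              (mulv (Smat (om i t)) m (eta i t) k + mu1 * ev i t k)) (at t within {0..})) \<and>
        (\<forall>i\<in>{1..N}. \<forall>t\<ge>0. \<forall>k\<in>{1..l}.
           ((\<lambda>s. om i s k) has_real_derivative
              (mu2 * mulv (phi (ev i t)) m (eta i t) k)) (at t within {0..})))"

end

theory Submission
  imports Defs
begin

text \<open>The proof is a Lyapunov argument. With \<open>H = L + diag(a\<^sub>i\<^sub>0)\<close> the pinned Laplacian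
  of the follower graph (positive definite because of the rooted spanning tree) and \<open>y\<^sub>k\<close> the
  vector of \<open>k\<close>-th coordinates of the tracking errors \<open>\<eta>\<^sub>i - v\<close>, the function
  \<open>V = |v|\<^sup>2 + \<Sum>\<^sub>k y\<^sub>k\<^sup>T H y\<^sub>k / 2 + \<Sum>\<^sub>i |\<omega>\<^sub>i - \<omega>|\<^sup>2 / (2 \<mu>\<^sub>2)\<close> satisfies
  \<open>V' = - \<mu>\<^sub>1 \<Sum>\<^sub>i |e\<^sub>v\<^sub>i|\<^sup>2\<close>: the skewness of \<open>S\<close> kills the leader term, the adaptation law
  cancels the terms in \<open>\<omega>\<^sub>i - \<omega>\<close>, and the symmetry of \<open>H\<close> kills the rotation terms.
  As \<open>V\<close> is coercive, the locally Lipschitz closed loop has global, bounded solutions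
  (Picard iteration for a clipped field, whose clipping is never active). Barbalat's lemma,
  applied to \<open>V\<close>, gives \<open>e\<^sub>v\<^sub>i \<rightarrow> 0\<close>; then \<open>y\<^sub>k\<^sup>T H y\<^sub>k = -\<Sum>\<^sub>i y\<^sub>k\<^sub>,\<^sub>i e\<^sub>v\<^sub>i\<^sub>,\<^sub>k \<rightarrow> 0\<close> gives
  \<open>y \<rightarrow> 0\<close>, Barbalat again gives \<open>y' \<rightarrow> 0\<close>, and \<open>S\<^sub>d(\<omega> - \<omega>\<^sub>0)\<eta>\<close> is a combination of
  \<open>y'\<close>, \<open>e\<^sub>v\<close> and \<open>y\<close>.\<close>

lemma mvt_halfline:
  fixes f :: "real \<Rightarrow> real"
  assumes "0 \<le> a" "a \<le> b"
    and der: "\<And>x. a \<le> x \<Longrightarrow> x \<le> b \<Longrightarrow> (f has_real_derivative f' x) (at x within {0..})"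
  obtains x where "a \<le> x" "x \<le> b" "f b - f a = f' x * (b - a)"
proof -
  have "\<exists>x\<in>{a..b}. f b - f a = (\<lambda>h. h * f' x) (b - a)"
  proof (rule mvt_very_simple[OF assms(2)])
    fix x assume x: "a \<le> x" "x \<le> b"
    have "(f has_real_derivative f' x) (at x within {a..b})"
      by (rule has_field_derivative_subset[OF der[OF x]]) (use assms(1) in auto)
    then show "(f has_derivative (\<lambda>h. h * f' x)) (at x within {a..b})"
      by (simp add: has_field_derivative_def mult_commute_abs)
  qed
  then show thesis using that by (auto simp: mult.commute)
qed

lemma nonincreasing_halfline:
  fixes f :: "real \<Rightarrow> real"
  assumes "\<And>x. 0 \<le> x \<Longrightarrow> (f has_real_derivative f' x) (at x within {0..})"
    and "\<And>x. 0 \<le> x \<Longrightarrow> f' x \<le> 0"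
    and "0 \<le> s" "s \<le> t"
  shows "f t \<le> f s"
proof -
  obtain x where "s \<le> x" "f t - f s = f' x * (t - s)"
    using mvt_halfline[OF assms(3,4)] assms(1,3) by (metis order_trans)
  moreover have "f' x * (t - s) \<le> 0"
    using assms(2,3,4) \<open>s \<le> x\<close> by (simp add: mult_nonpos_nonneg)
  ultimately show ?thesis by simp
qed

text \<open>A continuous-induction argument: the sublevel set \<open>{f \<le> c}\<close> cannot be left,
  because just after the last time in it \<open>f\<close> is still below \<open>c + 1\<close>, where it cannot grow.\<close>

lemma sublevel_invariant_halfline:
  fixes f :: "real \<Rightarrow> real"
  assumes der: "\<And>x. 0 \<le> x \<Longrightarrow> (f has_real_derivative f' x) (at x within {0..})"
    and nonpos: "\<And>x. 0 \<le> x \<Longrightarrow> f x \<le> c + 1 \<Longrightarrow> f' x \<le> 0"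
    and "f 0 \<le> c" "0 \<le> t"
  shows "f t \<le> c"
proof (rule ccontr)
  assume "\<not> f t \<le> c"
  have cont: "continuous_on {0..t} f"
    by (rule DERIV_continuous_on, rule has_field_derivative_subset[OF der]) auto
  define A where "A = {x\<in>{0..t}. f x \<le> c}"
  have "closed A"
    using continuous_closed_preimage[OF cont closed_atLeastAtMost, of "{..c}"]
    by (simp add: A_def vimage_def Int_def conj_commute)
  moreover have "0 \<in> A" "bdd_above A" using assms(3,4) by (auto simp: A_def)
  ultimately have "Sup A \<in> A" by (intro closed_contains_Sup) auto
  define s where "s = Sup A"
  have s: "0 \<le> s" "s \<le> t" "f s \<le> c"
    using \<open>Sup A \<in> A\<close> by (auto simp: A_def s_def)
  have above: "c < f y" if "s < y" "y \<le> t" for y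
    using cSup_upper[of y A] \<open>bdd_above A\<close> that s by (force simp: A_def s_def)
  with \<open>\<not> f t \<le> c\<close> s have "s < t" by (cases "s = t") auto
  have "\<forall>\<^sub>F y in at s within {0..t}. dist (f y) (f s) < 1"
    using cont s by (auto simp: continuous_on_eq_continuous_within continuous_within tendsto_iff)
  then obtain d where "d > 0"
    and d: "\<And>y. y \<in> {0..t} \<Longrightarrow> y \<noteq> s \<Longrightarrow> dist y s < d \<Longrightarrow> dist (f y) (f s) < 1"
    unfolding eventually_at by blast
  define u where "u = min t (s + d / 2)"
  have u: "s < u" "u \<le> t" using \<open>s < t\<close> \<open>d > 0\<close> by (auto simp: u_def)
  obtain x where x: "s \<le> x" "x \<le> u" "f u - f s = f' x * (u - s)"
    using mvt_halfline[OF s(1) less_imp_le[OF u(1)]] der s(1) by (metis order_trans)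
  have "dist (f x) (f s) < 1"
  proof (cases "x = s")
    case False
    then show ?thesis using x u s \<open>d > 0\<close> by (intro d) (auto simp: dist_real_def u_def)
  qed simp
  then have "f' x \<le> 0" using nonpos[of x] x s by (auto simp: dist_real_def)
  then have "f' x * (u - s) \<le> 0" using u by (simp add: mult_nonpos_nonneg)
  then have "f u \<le> f s" using x by simp
  then show False using above[OF u] s by simp
qed

lemma antimono_tendsto_Inf_halfline:
  fixes f :: "real \<Rightarrow> real"
  assumes mono: "\<And>s t. 0 \<le> s \<Longrightarrow> s \<le> t \<Longrightarrow> f t \<le> f s"
    and bdd: "\<And>t. 0 \<le> t \<Longrightarrow> b \<le> f t"
  shows "(f \<longlongrightarrow> Inf (f ` {0..})) at_top"
proof (rule decreasing_tendsto)
  have "bdd_below (f ` {0..})" using bdd by (auto intro!: bdd_belowI[of _ b])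
  then show "\<forall>\<^sub>F t in at_top. Inf (f ` {0..}) \<le> f t"
    by (auto intro!: cInf_lower simp: eventually_at_top_linorder)
  fix y assume "Inf (f ` {0..}) < y"
  then obtain T where "0 \<le> T" "f T < y" by (auto simp: cInf_less_iff[OF _ \<open>bdd_below _\<close>])
  then show "\<forall>\<^sub>F t in at_top. f t < y"
    unfolding eventually_at_top_linorder using mono by (meson le_less_trans)
qed

lemma barbalat:
  fixes f f' :: "real \<Rightarrow> real"
  assumes der: "\<And>x. 0 \<le> x \<Longrightarrow> (f has_real_derivative f' x) (at x within {0..})"
    and lim: "(f \<longlongrightarrow> L) at_top"
    and uc: "uniformly_continuous_on {0..} f'"
  shows "(f' \<longlongrightarrow> 0) at_top"
  unfolding tendsto_iff
proof (intro allI impI)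
  fix e :: real assume "e > 0"
  then obtain d where "d > 0" and d: "\<And>x t. 0 \<le> x \<Longrightarrow> 0 \<le> t \<Longrightarrow> dist x t < d \<Longrightarrow> \<bar>f' x - f' t\<bar> < e / 2"
    using uc unfolding uniformly_continuous_on_def dist_real_def
    by (metis atLeast_iff half_gt_zero)
  define h where "h = d / 2"
  have "h > 0" "h < d" using \<open>d > 0\<close> by (auto simp: h_def)
  have "\<forall>\<^sub>F t in at_top. dist (f t) L < e * h / 4"
    using lim \<open>e > 0\<close> \<open>h > 0\<close> unfolding tendsto_iff by (meson divide_pos_pos mult_pos_pos zero_less_numeral)
  then obtain T where T: "\<And>t. T \<le> t \<Longrightarrow> \<bar>f t - L\<bar> < e * h / 4"
    by (auto simp: eventually_at_top_linorder dist_real_def)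
  show "\<forall>\<^sub>F t in at_top. dist (f' t) 0 < e"
    unfolding eventually_at_top_linorder
  proof (intro exI allI impI)
    fix t assume t: "max T 0 \<le> t"
    obtain x where x: "t \<le> x" "x \<le> t + h" "f (t + h) - f t = f' x * (t + h - t)"
      by (rule mvt_halfline[of t "t + h" f f']) (use t \<open>h > 0\<close> der in auto)
    have "\<bar>f' x\<bar> * h = \<bar>f (t + h) - f t\<bar>" using x \<open>h > 0\<close> by (simp add: abs_mult)
    also have "\<dots> < e * h / 2"
    proof -
      have "\<bar>f t - L\<bar> < e * h / 4" "\<bar>f (t + h) - L\<bar> < e * h / 4"
        using T t \<open>h > 0\<close> by auto
      then show ?thesis unfolding abs_less_iff by linarith
    qed
    finally have "\<bar>f' x\<bar> < e / 2" using \<open>h > 0\<close> by (simp add: field_simps)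
    moreover have "\<bar>f' x - f' t\<bar> < e / 2"
      using x t \<open>h < d\<close> by (intro d) (auto simp: dist_real_def)
    ultimately show "dist (f' t) 0 < e" unfolding dist_real_def abs_less_iff by linarith
  qed
qed

lemma has_real_derivative_power2:
  assumes "(f has_real_derivative f') (at t within S)"
  shows "((\<lambda>s. (f s)\<^sup>2) has_real_derivative 2 * f t * f') (at t within S)"
  using DERIV_power[OF assms, of 2] by (simp add: mult.commute mult.left_commute)

lemma tendsto_zero_if_power2:
  fixes f :: "real \<Rightarrow> real"
  assumes "((\<lambda>t. (f t)\<^sup>2) \<longlongrightarrow> 0) at_top"
  shows "(f \<longlongrightarrow> 0) at_top"
proof -
  have "((\<lambda>t. sqrt ((f t)\<^sup>2)) \<longlongrightarrow> sqrt 0) at_top" by (intro tendsto_intros assms)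
  then have "((\<lambda>t. \<bar>f t\<bar>) \<longlongrightarrow> 0) at_top" by simp
  then show ?thesis by (simp add: tendsto_rabs_zero_iff)
qed

lemma tendsto_bounded_mult_zero:
  fixes f g :: "real \<Rightarrow> real"
  assumes "\<And>t. 0 \<le> t \<Longrightarrow> \<bar>f t\<bar> \<le> B" "(g \<longlongrightarrow> 0) at_top"
  shows "((\<lambda>t. f t * g t) \<longlongrightarrow> 0) at_top"
proof (rule Lim_null_comparison)
  show "\<forall>\<^sub>F t in at_top. norm (f t * g t) \<le> B * \<bar>g t\<bar>"
    unfolding eventually_at_top_linorder
    by (rule exI[of _ 0]) (auto simp: abs_mult intro!: mult_right_mono assms(1))
  have "((\<lambda>t. B * \<bar>g t\<bar>) \<longlongrightarrow> B * \<bar>0\<bar>) at_top" by (intro tendsto_intros assms)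
  then show "((\<lambda>t. B * \<bar>g t\<bar>) \<longlongrightarrow> 0) at_top" by simp
qed

lemma abs_le_if_sq_le: "(a::real)\<^sup>2 \<le> C \<Longrightarrow> \<bar>a\<bar> \<le> C + 1"
proof (cases "\<bar>a\<bar> \<le> 1")
  case True
  moreover assume "a\<^sup>2 \<le> C"
  moreover have "0 \<le> a\<^sup>2" by simp
  ultimately show ?thesis by linarith
next
  case False
  assume h: "a\<^sup>2 \<le> C"
  have "\<bar>a\<bar> * 1 \<le> \<bar>a\<bar> * \<bar>a\<bar>" using False by (intro mult_left_mono) auto
  then have "\<bar>a\<bar> \<le> a\<^sup>2" by (simp add: power2_eq_square abs_mult[symmetric])
  then show ?thesis using h by linarith
qed

lemma integral_has_real_derivative_halfline:
  fixes g :: "real \<Rightarrow> real"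
  assumes "continuous_on {0..} g" "0 \<le> t"
  shows "((\<lambda>u. integral {0..u} g) has_real_derivative g t) (at t within {0..})"
proof -
  have "((\<lambda>u. integral {0..u} g) has_real_derivative g t) (at t within {0..t+1})"
    by (rule integral_has_real_derivative) (use assms in \<open>auto intro: continuous_on_subset\<close>)
  moreover have "at t within {0..t+1} = at t within {0..}"
    by (rule at_within_nhd[of _ "{..<t+1}"]) auto
  ultimately show ?thesis by simp
qed

lemma integral_power_atLeastAtMost_0:
  assumes "0 \<le> t"
  shows "integral {0..t} (\<lambda>s::real. s ^ n) = t ^ Suc n / Suc n"
proof -
  have "((\<lambda>s::real. s ^ n) has_integral (t ^ Suc n / Suc n - 0 ^ Suc n / Suc n)) {0..t}"
  proof (rule fundamental_theorem_of_calculus)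
    fix x :: real assume "x \<in> {0..t}"
    have "((\<lambda>x. x ^ Suc n / Suc n) has_real_derivative x ^ n) (at x within {0..t})"
      by (rule derivative_eq_intros refl | simp)+
    then show "((\<lambda>x. x ^ Suc n / Suc n) has_vector_derivative x ^ n) (at x within {0..t})"
      by (simp add: has_real_derivative_iff_has_vector_derivative)
  qed fact
  then show ?thesis by (simp add: integral_unique)
qed

locale lipschitz_field =
  fixes F :: "('a \<Rightarrow> real) \<Rightarrow> 'a \<Rightarrow> real" and D :: "'a set" and L M :: real
  assumes finite_D: "finite D" and L_nonneg: "0 \<le> L"
    and bounded: "\<And>x k. k \<in> D \<Longrightarrow> \<bar>F x k\<bar> \<le> M"
    and lipschitz: "\<And>x y k. k \<in> D \<Longrightarrow> \<bar>F x k - F y k\<bar> \<le> L * (\<Sum>j\<in>D. \<bar>x j - y j\<bar>)"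
begin

lemma M_nonneg: "k \<in> D \<Longrightarrow> 0 \<le> M"
  using bounded[of k undefined] by (meson abs_ge_zero order_trans)

lemma continuous_on_field:
  assumes "\<And>j. j \<in> D \<Longrightarrow> continuous_on S (\<lambda>s. Y s j)" "k \<in> D"
  shows "continuous_on S (\<lambda>s. F (Y s) k)"
  unfolding continuous_on_def
proof
  fix x assume "x \<in> S"
  have "((\<lambda>s. L * (\<Sum>j\<in>D. \<bar>Y s j - Y x j\<bar>)) \<longlongrightarrow> L * (\<Sum>j\<in>D. \<bar>Y x j - Y x j\<bar>)) (at x within S)"
    using assms(1) \<open>x \<in> S\<close> by (intro tendsto_intros) (auto simp: continuous_on_def)
  then have "((\<lambda>s. L * (\<Sum>j\<in>D. \<bar>Y s j - Y x j\<bar>)) \<longlongrightarrow> 0) (at x within S)"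
    by simp
  then have "((\<lambda>s. F (Y s) k - F (Y x) k) \<longlongrightarrow> 0) (at x within S)"
    by (rule Lim_null_comparison[OF always_eventually, rotated]) (simp add: lipschitz[OF assms(2)])
  then show "((\<lambda>s. F (Y s) k) \<longlongrightarrow> F (Y x) k) (at x within S)"
    by (rule LIM_zero_cancel)
qed

primrec picard_iter :: "('a \<Rightarrow> real) \<Rightarrow> nat \<Rightarrow> real \<Rightarrow> 'a \<Rightarrow> real" where
  "picard_iter x0 0 = (\<lambda>t. x0)"
| "picard_iter x0 (Suc n) = (\<lambda>t k. x0 k + integral {0..t} (\<lambda>s. F (picard_iter x0 n s) k))"

declare picard_iter.simps(2) [simp del]

lemma picard_iter_Suc_apply:
  "picard_iter x0 (Suc n) t k = x0 k + integral {0..t} (\<lambda>s. F (picard_iter x0 n s) k)"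
  by (simp add: picard_iter.simps(2))

lemma picard_iter_Suc_has_derivative:
  assumes "\<And>j. j \<in> D \<Longrightarrow> continuous_on {0..} (\<lambda>t. picard_iter x0 n t j)" "k \<in> D" "0 \<le> t"
  shows "((\<lambda>t. picard_iter x0 (Suc n) t k) has_real_derivative F (picard_iter x0 n t) k)
    (at t within {0..})"
  unfolding picard_iter_Suc_apply
  using DERIV_add[OF DERIV_const integral_has_real_derivative_halfline
      [OF continuous_on_field[OF assms(1,2)] assms(3)]]
  by simp

lemma continuous_on_picard_iter: "k \<in> D \<Longrightarrow> continuous_on {0..} (\<lambda>t. picard_iter x0 n t k)"
proof (induction n arbitrary: k)
  case (Suc n)
  show ?case
    by (rule DERIV_continuous_on, rule picard_iter_Suc_has_derivative) (use Suc in auto)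
qed simp

lemma picard_iter_has_derivative:
  "k \<in> D \<Longrightarrow> 0 \<le> t \<Longrightarrow> ((\<lambda>t. picard_iter x0 (Suc n) t k) has_real_derivative
     F (picard_iter x0 n t) k) (at t within {0..})"
  by (rule picard_iter_Suc_has_derivative[OF continuous_on_picard_iter])

lemma integrable_field_picard_iter:
  "k \<in> D \<Longrightarrow> (\<lambda>s. F (picard_iter x0 n s) k) integrable_on {0..t}"
  by (intro integrable_continuous_interval continuous_on_field
      continuous_on_subset[OF continuous_on_picard_iter]) auto

lemma picard_iter_step_bound:
  assumes "0 \<le> t" "k \<in> D"
  shows "\<bar>picard_iter x0 (Suc n) t k - picard_iter x0 n t k\<bar>
    \<le> M * (L * card D) ^ n * t ^ Suc n / fact (Suc n)"
  using assms
proof (induction n arbitrary: t k)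
  case 0
  have "\<bar>picard_iter x0 (Suc 0) t k - picard_iter x0 0 t k\<bar> = t * \<bar>F x0 k\<bar>"
    using 0 by (simp add: picard_iter_Suc_apply abs_mult)
  also have "\<dots> \<le> t * M" using bounded[OF 0(2)] 0(1) by (rule mult_left_mono)
  finally show ?case by (simp add: mult.commute)
next
  case (Suc n)
  define c where "c = L * card D"
  have bound: "\<bar>F (picard_iter x0 (Suc n) s) k - F (picard_iter x0 n s) k\<bar>
      \<le> M * c ^ Suc n * s ^ Suc n / fact (Suc n)" if "s \<in> {0..t}" for s
  proof -
    have "\<bar>F (picard_iter x0 (Suc n) s) k - F (picard_iter x0 n s) k\<bar>
        \<le> L * (\<Sum>j\<in>D. \<bar>picard_iter x0 (Suc n) s j - picard_iter x0 n s j\<bar>)"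
      by (rule lipschitz[OF Suc(3)])
    also have "\<dots> \<le> L * (\<Sum>j\<in>D. M * c ^ n * s ^ Suc n / fact (Suc n))"
      using that by (intro mult_left_mono[OF _ L_nonneg] sum_mono Suc.IH[unfolded c_def[symmetric]]) auto
    also have "\<dots> = M * c ^ Suc n * s ^ Suc n / fact (Suc n)"
      by (simp add: c_def mult_ac del: fact_Suc)
    finally show ?thesis .
  qed
  have "picard_iter x0 (Suc (Suc n)) t k - picard_iter x0 (Suc n) t k
      = integral {0..t} (\<lambda>s. F (picard_iter x0 (Suc n) s) k)
        - integral {0..t} (\<lambda>s. F (picard_iter x0 n s) k)"
    unfolding picard_iter_Suc_apply by simp
  also have "\<dots> = integral {0..t} (\<lambda>s. F (picard_iter x0 (Suc n) s) k - F (picard_iter x0 n s) k)"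
    by (rule integral_diff[symmetric]) (intro integrable_field_picard_iter Suc(3))+
  finally have "\<bar>picard_iter x0 (Suc (Suc n)) t k - picard_iter x0 (Suc n) t k\<bar>
      = \<bar>integral {0..t} (\<lambda>s. F (picard_iter x0 (Suc n) s) k - F (picard_iter x0 n s) k)\<bar>"
    by simp
  also have "\<dots> \<le> integral {0..t} (\<lambda>s. M * c ^ Suc n * s ^ Suc n / fact (Suc n))"
  proof (rule integral_norm_bound_integral[where 'n=real and 'a=real, simplified])
    show "(\<lambda>s. F (picard_iter x0 (Suc n) s) k - F (picard_iter x0 n s) k) integrable_on {0..t}"
      by (intro integrable_diff integrable_field_picard_iter Suc(3))
    show "(\<lambda>s. M * c ^ Suc n * s ^ Suc n / fact (Suc n)) integrable_on {0..t}"
      by (intro integrable_continuous_interval continuous_intros) auto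
  qed (rule bound)
  also have "\<dots> = M * c ^ Suc n / fact (Suc n) * integral {0..t} (\<lambda>s. s ^ Suc n)"
    by (simp add: mult.commute)
  also have "\<dots> = M * c ^ Suc n * t ^ Suc (Suc n) / fact (Suc (Suc n))"
    unfolding integral_power_atLeastAtMost_0[OF Suc(2)]
    by (simp add: field_simps del: fact_Suc add: fact_Suc[of "Suc n"])
  finally show ?case unfolding c_def .
qed

lemma convergent_picard_iter:
  assumes "0 \<le> t" "k \<in> D"
  shows "convergent (\<lambda>n. picard_iter x0 n t k)"
proof -
  define c where "c = L * card D"
  have "0 \<le> c" "0 \<le> M" using L_nonneg M_nonneg[OF assms(2)] by (auto simp: c_def)
  have "summable (\<lambda>n. picard_iter x0 (Suc n) t k - picard_iter x0 n t k)"
  proof (rule summable_comparison_test)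
    show "summable (\<lambda>n. M * t * (inverse (fact n) * (c * t) ^ n))"
      by (intro summable_mult summable_exp)
    have "\<bar>picard_iter x0 (Suc n) t k - picard_iter x0 n t k\<bar> \<le> M * c ^ n * t ^ Suc n / fact (Suc n)" for n
      using picard_iter_step_bound[OF assms] by (simp add: c_def)
    also have "M * c ^ n * t ^ Suc n / fact (Suc n) \<le> M * c ^ n * t ^ Suc n / fact n" for n
      using \<open>0 \<le> c\<close> \<open>0 \<le> M\<close> assms(1) by (intro divide_left_mono) (auto intro: fact_mono)
    also have "M * c ^ n * t ^ Suc n / fact n = M * t * (inverse (fact n) * (c * t) ^ n)" for n
      by (simp add: power_mult_distrib divide_inverse mult_ac)
    finally show "\<exists>N. \<forall>n\<ge>N. norm (picard_iter x0 (Suc n) t k - picard_iter x0 n t k)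
        \<le> M * t * (inverse (fact n) * (c * t) ^ n)"
      by auto
  qed
  then have "convergent (\<lambda>n. \<Sum>i<n. picard_iter x0 (Suc i) t k - picard_iter x0 i t k)"
    by (simp add: summable_iff_convergent)
  then have "convergent (\<lambda>n. (picard_iter x0 n t k - x0 k) + x0 k)"
    using sum_lessThan_telescope[of "\<lambda>i. picard_iter x0 i t k"]
    by (intro convergent_add convergent_const) simp
  then show ?thesis by simp
qed

definition picard_limit :: "('a \<Rightarrow> real) \<Rightarrow> real \<Rightarrow> 'a \<Rightarrow> real" where
  "picard_limit x0 t k = lim (\<lambda>n. picard_iter x0 n t k)"

lemma picard_iter_tendsto:
  assumes "0 \<le> t" "k \<in> D"
  shows "(\<lambda>n. picard_iter x0 n t k) \<longlonglongrightarrow> picard_limit x0 t k"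
  using convergent_picard_iter[OF assms] unfolding picard_limit_def by (simp add: convergent_LIMSEQ_iff)

lemma continuous_on_picard_limit:
  assumes "k \<in> D"
  shows "continuous_on {0..} (\<lambda>t. picard_limit x0 t k)"
proof (rule lipschitz_on_continuous_on[OF lipschitz_onI])
  fix s t :: real assume "s \<in> {0..}" "t \<in> {0..}"
  have "(\<lambda>n. picard_iter x0 (Suc n) s k) \<longlonglongrightarrow> picard_limit x0 s k"
    "(\<lambda>n. picard_iter x0 (Suc n) t k) \<longlonglongrightarrow> picard_limit x0 t k"
    using \<open>s \<in> _\<close> \<open>t \<in> _\<close> assms by (auto intro!: LIMSEQ_Suc picard_iter_tendsto)
  then have "(\<lambda>n. \<bar>picard_iter x0 (Suc n) s k - picard_iter x0 (Suc n) t k\<bar>)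
      \<longlonglongrightarrow> \<bar>picard_limit x0 s k - picard_limit x0 t k\<bar>"
    by (intro tendsto_intros)
  moreover have "\<bar>picard_iter x0 (Suc n) s k - picard_iter x0 (Suc n) t k\<bar> \<le> M * \<bar>s - t\<bar>" for n
    using field_differentiable_bound[of "{0..}" "\<lambda>t. picard_iter x0 (Suc n) t k"
        "\<lambda>t. F (picard_iter x0 n t) k" M s t]
      picard_iter_has_derivative bounded assms \<open>s \<in> _\<close> \<open>t \<in> _\<close> by auto
  ultimately show "dist (picard_limit x0 s k) (picard_limit x0 t k) \<le> M * dist s t"
    by (simp add: dist_real_def LIMSEQ_le_const2)
qed (rule M_nonneg[OF assms])

lemma picard_limit_integral_eq:
  assumes "0 \<le> t" "k \<in> D"
  shows "picard_limit x0 t k = x0 k + integral {0..t} (\<lambda>s. F (picard_limit x0 s) k)"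
proof -
  have "(\<lambda>n. integral {0..t} (\<lambda>s. F (picard_iter x0 n s) k))
      \<longlonglongrightarrow> integral {0..t} (\<lambda>s. F (picard_limit x0 s) k)"
  proof (rule dominated_convergence(2)[where h="\<lambda>s. M"])
    fix s assume "s \<in> {0..t}"
    have "(\<lambda>n. L * (\<Sum>j\<in>D. \<bar>picard_iter x0 n s j - picard_limit x0 s j\<bar>))
        \<longlonglongrightarrow> L * (\<Sum>j\<in>D. \<bar>picard_limit x0 s j - picard_limit x0 s j\<bar>)"
      using \<open>s \<in> _\<close> by (intro tendsto_intros picard_iter_tendsto) auto
    then have "(\<lambda>n. L * (\<Sum>j\<in>D. \<bar>picard_iter x0 n s j - picard_limit x0 s j\<bar>)) \<longlonglongrightarrow> 0"
      by simp
    then have "(\<lambda>n. F (picard_iter x0 n s) k - F (picard_limit x0 s) k) \<longlonglongrightarrow> 0"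
      by (rule Lim_null_comparison[OF always_eventually, rotated]) (simp add: lipschitz[OF assms(2)])
    then show "(\<lambda>n. F (picard_iter x0 n s) k) \<longlonglongrightarrow> F (picard_limit x0 s) k"
      by (rule LIM_zero_cancel)
  qed (use integrable_field_picard_iter bounded assms in auto)
  then have "(\<lambda>n. picard_iter x0 (Suc n) t k)
      \<longlonglongrightarrow> x0 k + integral {0..t} (\<lambda>s. F (picard_limit x0 s) k)"
    unfolding picard_iter_Suc_apply by (intro tendsto_add tendsto_const)
  moreover have "(\<lambda>n. picard_iter x0 (Suc n) t k) \<longlonglongrightarrow> picard_limit x0 t k"
    by (intro LIMSEQ_Suc picard_iter_tendsto assms)
  ultimately show ?thesis using LIMSEQ_unique by blast
qed

theorem picard_existence:
  "\<exists>X. X 0 = x0 \<and>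
     (\<forall>t\<ge>0. \<forall>k\<in>D. ((\<lambda>s. X s k) has_real_derivative F (X t) k) (at t within {0..}))"
proof (intro exI conjI allI impI ballI)
  show "picard_limit x0 0 = x0"
  proof -
    have "picard_iter x0 n 0 = x0" for n by (cases n) (simp_all add: fun_eq_iff picard_iter_Suc_apply)
    then show ?thesis by (simp add: picard_limit_def fun_eq_iff)
  qed
next
  fix t :: real and k assume "0 \<le> t" "k \<in> D"
  have "((\<lambda>s. x0 k + integral {0..s} (\<lambda>u. F (picard_limit x0 u) k)) has_real_derivative
      F (picard_limit x0 t) k) (at t within {0..})"
    using DERIV_add[OF DERIV_const integral_has_real_derivative_halfline
        [OF continuous_on_field[OF continuous_on_picard_limit \<open>k \<in> D\<close>] \<open>0 \<le> t\<close>]]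
    by simp
  then show "((\<lambda>s. picard_limit x0 s k) has_real_derivative F (picard_limit x0 t) k) (at t within {0..})"
    by (rule has_field_derivative_transform_within[OF _ zero_less_one])
      (use \<open>0 \<le> t\<close> \<open>k \<in> D\<close> picard_limit_integral_eq in auto)
qed

end

lemma Smat_entry:
  assumes "1 \<le> k" "1 \<le> j"
  shows "Smat z k j * x j =
    (if j = k + 1 then (if odd k then z ((k+1) div 2) * x (k + 1) else 0) else 0) +
    (if j = k - 1 then (if even k then - (z (k div 2) * x (k - 1)) else 0) else 0)"
proof -
  have "k = 2 * ((k-1) div 2) + 1 \<or> k = 2 * ((k-1) div 2) + 2" using assms(1) by presburger
  then obtain a where a: "k = 2 * a + 1 \<or> k = 2 * a + 2" by blast
  have "j = 2 * ((j-1) div 2) + 1 \<or> j = 2 * ((j-1) div 2) + 2" using assms(2) by presburger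
  then obtain b where b: "j = 2 * b + 1 \<or> j = 2 * b + 2" by blast
  show ?thesis
    using a b unfolding Smat_def kron_def diagm_def amat_def
    by (elim disjE; auto simp: algebra_simps; presburger)
qed

lemma mulv_Smat:
  assumes "k \<in> {1..2*l}"
  shows "mulv (Smat z) (2*l) x k = (if odd k then z ((k+1) div 2) * x (k + 1) else - (z (k div 2) * x (k - 1)))"
proof -
  have "mulv (Smat z) (2*l) x k = (\<Sum>j=1..2*l. (if j = k + 1 then (if odd k then z ((k+1) div 2) * x (k + 1) else 0) else 0) +
    (if j = k - 1 then (if even k then - (z (k div 2) * x (k - 1)) else 0) else 0))"
    unfolding mulv_def using assms by (intro sum.cong refl Smat_entry) auto
  also have "\<dots> = (if odd k then z ((k+1) div 2) * x (k + 1) else - (z (k div 2) * x (k - 1)))"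
  proof (cases "odd k")
    case True
    then have "k + 1 \<in> {1..2*l}" using assms by (auto; presburger)
    moreover have "k - 1 \<noteq> k + 1" by arith
    ultimately show ?thesis using True by (simp add: sum.distrib)
  next
    case False
    then have "k - 1 \<in> {1..2*l}" using assms by (auto; presburger)
    moreover have "k - 1 \<noteq> k + 1" by arith
    ultimately show ?thesis using False by (simp add: sum.distrib)
  qed
  finally show ?thesis .
qed

lemma mulv_phi:
  assumes "q \<in> {1..l}"
  shows "mulv (phi e) (2*l) x q = e (2*q-1) * x (2*q) - e (2*q) * x (2*q-1)"
proof -
  have "mulv (phi e) (2*l) x q = (\<Sum>j=1..2*l. (if j = 2*q-1 then - e (2*q) * x (2*q-1) else 0) + (if j = 2*q then e (2*q-1) * x (2*q) else 0))"
    unfolding mulv_def phi_def using assms by (intro sum.cong refl) auto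
  also have "\<dots> = e (2*q-1) * x (2*q) - e (2*q) * x (2*q-1)"
  proof -
    have "2*q - 1 \<in> {1..2*l}" "2*q \<in> {1..2*l}" "2*q - 1 \<noteq> 2*q" using assms by auto
    then show ?thesis by (simp add: sum.distrib)
  qed
  finally show ?thesis .
qed

definition in_box :: "'a set \<Rightarrow> real \<Rightarrow> ('a \<Rightarrow> real) \<Rightarrow> bool" where
  "in_box D R x \<longleftrightarrow> (\<forall>j\<in>D. \<bar>x j\<bar> \<le> R)"

definition box_lipschitz :: "'a set \<Rightarrow> (('a \<Rightarrow> real) \<Rightarrow> real) \<Rightarrow> bool" where
  "box_lipschitz D f \<longleftrightarrow> (\<forall>R. \<exists>M L. 0 \<le> L \<and> (\<forall>x y. in_box D R x \<longrightarrow> in_box D R y \<longrightarrow>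
      \<bar>f x\<bar> \<le> M \<and> \<bar>f x - f y\<bar> \<le> L * (\<Sum>j\<in>D. \<bar>x j - y j\<bar>)))"

lemma box_lipschitzE:
  assumes "box_lipschitz D f"
  obtains M L where "0 \<le> L" "\<And>x y. in_box D R x \<Longrightarrow> in_box D R y \<Longrightarrow>
      \<bar>f x\<bar> \<le> M \<and> \<bar>f x - f y\<bar> \<le> L * (\<Sum>j\<in>D. \<bar>x j - y j\<bar>)"
proof -
  have "\<exists>M L. 0 \<le> L \<and> (\<forall>x y. in_box D R x \<longrightarrow> in_box D R y \<longrightarrow>
      \<bar>f x\<bar> \<le> M \<and> \<bar>f x - f y\<bar> \<le> L * (\<Sum>j\<in>D. \<bar>x j - y j\<bar>))"
    using assms unfolding box_lipschitz_def by (rule spec)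
  then obtain M L where "0 \<le> L" and H: "\<forall>x y. in_box D R x \<longrightarrow> in_box D R y \<longrightarrow>
      \<bar>f x\<bar> \<le> M \<and> \<bar>f x - f y\<bar> \<le> L * (\<Sum>j\<in>D. \<bar>x j - y j\<bar>)" by blast
  show thesis by (rule that[OF \<open>0 \<le> L\<close>]) (use H in blast)
qed

lemma box_lipschitz_const: "box_lipschitz D (\<lambda>x. c)"
  unfolding box_lipschitz_def
proof
  fix R :: real
  show "\<exists>M L. 0 \<le> L \<and> (\<forall>x y. in_box D R x \<longrightarrow> in_box D R y \<longrightarrow>
      \<bar>c\<bar> \<le> M \<and> \<bar>c - c\<bar> \<le> L * (\<Sum>j\<in>D. \<bar>x j - y j\<bar>))"
    by (rule exI[of _ "\<bar>c\<bar>"], rule exI[of _ 0]) simp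
qed

lemma box_lipschitz_coord:
  assumes "finite D" "j \<in> D"
  shows "box_lipschitz D (\<lambda>x. x j)"
  unfolding box_lipschitz_def
proof
  fix R :: real
  show "\<exists>M L. 0 \<le> L \<and> (\<forall>x y. in_box D R x \<longrightarrow> in_box D R y \<longrightarrow>
      \<bar>x j\<bar> \<le> M \<and> \<bar>x j - y j\<bar> \<le> L * (\<Sum>j\<in>D. \<bar>x j - y j\<bar>))"
  proof (rule exI[of _ R], rule exI[of _ 1], intro conjI allI impI)
    fix x y :: "'a \<Rightarrow> real" assume "in_box D R x" "in_box D R y"
    then show "\<bar>x j\<bar> \<le> R" using assms(2) by (simp add: in_box_def)
    have "\<bar>x j - y j\<bar> \<le> (\<Sum>j\<in>D. \<bar>x j - y j\<bar>)"
      by (rule member_le_sum[OF assms(2)]) (use assms(1) in auto)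
    then show "\<bar>x j - y j\<bar> \<le> 1 * (\<Sum>j\<in>D. \<bar>x j - y j\<bar>)" by simp
  qed simp
qed

lemma box_lipschitz_add:
  assumes "box_lipschitz D f" "box_lipschitz D g"
  shows "box_lipschitz D (\<lambda>x. f x + g x)"
  unfolding box_lipschitz_def
proof
  fix R
  obtain M1 L1 where 1: "0 \<le> L1" "\<And>x y. in_box D R x \<Longrightarrow> in_box D R y \<Longrightarrow>
      \<bar>f x\<bar> \<le> M1 \<and> \<bar>f x - f y\<bar> \<le> L1 * (\<Sum>j\<in>D. \<bar>x j - y j\<bar>)" using box_lipschitzE[OF assms(1), where R=R] by metis
  obtain M2 L2 where 2: "0 \<le> L2" "\<And>x y. in_box D R x \<Longrightarrow> in_box D R y \<Longrightarrow>
      \<bar>g x\<bar> \<le> M2 \<and> \<bar>g x - g y\<bar> \<le> L2 * (\<Sum>j\<in>D. \<bar>x j - y j\<bar>)" using box_lipschitzE[OF assms(2), where R=R] by metis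
  show "\<exists>M L. 0 \<le> L \<and> (\<forall>x y. in_box D R x \<longrightarrow> in_box D R y \<longrightarrow>
      \<bar>f x + g x\<bar> \<le> M \<and> \<bar>f x + g x - (f y + g y)\<bar> \<le> L * (\<Sum>j\<in>D. \<bar>x j - y j\<bar>))"
  proof (rule exI[of _ "M1 + M2"], rule exI[of _ "L1 + L2"], intro conjI allI impI)
    fix x y assume xy: "in_box D R x" "in_box D R y"
    show "\<bar>f x + g x\<bar> \<le> M1 + M2" using abs_triangle_ineq[of "f x" "g x"] 1(2)[OF xy] 2(2)[OF xy] by linarith
    have eq: "f x + g x - (f y + g y) = (f x - f y) + (g x - g y)" by simp
    show "\<bar>f x + g x - (f y + g y)\<bar> \<le> (L1 + L2) * (\<Sum>j\<in>D. \<bar>x j - y j\<bar>)"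
      unfolding eq distrib_right using abs_triangle_ineq[of "f x - f y" "g x - g y"] 1(2)[OF xy] 2(2)[OF xy] by linarith
  qed (use 1 2 in auto)
qed

lemma box_lipschitz_mult:
  assumes "box_lipschitz D f" "box_lipschitz D g"
  shows "box_lipschitz D (\<lambda>x. f x * g x)"
  unfolding box_lipschitz_def
proof
  fix R
  obtain M1 L1 where 1: "0 \<le> L1" "\<And>x y. in_box D R x \<Longrightarrow> in_box D R y \<Longrightarrow>
      \<bar>f x\<bar> \<le> M1 \<and> \<bar>f x - f y\<bar> \<le> L1 * (\<Sum>j\<in>D. \<bar>x j - y j\<bar>)" using box_lipschitzE[OF assms(1), where R=R] by metis
  obtain M2 L2 where 2: "0 \<le> L2" "\<And>x y. in_box D R x \<Longrightarrow> in_box D R y \<Longrightarrow>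
      \<bar>g x\<bar> \<le> M2 \<and> \<bar>g x - g y\<bar> \<le> L2 * (\<Sum>j\<in>D. \<bar>x j - y j\<bar>)" using box_lipschitzE[OF assms(2), where R=R] by metis
  define M1' where "M1' = max M1 0"
  define M2' where "M2' = max M2 0"
  show "\<exists>M L. 0 \<le> L \<and> (\<forall>x y. in_box D R x \<longrightarrow> in_box D R y \<longrightarrow>
      \<bar>f x * g x\<bar> \<le> M \<and> \<bar>f x * g x - f y * g y\<bar> \<le> L * (\<Sum>j\<in>D. \<bar>x j - y j\<bar>))"
  proof (rule exI[of _ "M1' * M2'"], rule exI[of _ "M1' * L2 + M2' * L1"], intro conjI allI impI)
    show "0 \<le> M1' * L2 + M2' * L1" using 1 2 by (simp add: M1'_def M2'_def)
    fix x y assume xy: "in_box D R x" "in_box D R y"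
    define S where "S = (\<Sum>j\<in>D. \<bar>x j - y j\<bar>)"
    have S0: "0 \<le> S" unfolding S_def by (intro sum_nonneg) auto
    have a: "\<bar>f x\<bar> \<le> M1'" "\<bar>g y\<bar> \<le> M2'" "\<bar>g x\<bar> \<le> M2'"
      using 1(2)[OF xy] 2(2)[OF xy] 2(2)[OF xy(2) xy(1)] by (auto simp: M1'_def M2'_def)
    have b: "\<bar>f x - f y\<bar> \<le> L1 * S" "\<bar>g x - g y\<bar> \<le> L2 * S"
      using 1(2)[OF xy] 2(2)[OF xy] by (auto simp: S_def)
    show "\<bar>f x * g x\<bar> \<le> M1' * M2'" unfolding abs_mult using a by (intro mult_mono) auto
    have "f x * g x - f y * g y = f x * (g x - g y) + g y * (f x - f y)" by (simp add: algebra_simps)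
    moreover have "\<bar>f x * (g x - g y) + g y * (f x - f y)\<bar> \<le> \<bar>f x * (g x - g y)\<bar> + \<bar>g y * (f x - f y)\<bar>"
      by (rule abs_triangle_ineq)
    ultimately have "\<bar>f x * g x - f y * g y\<bar> \<le> \<bar>f x\<bar> * \<bar>g x - g y\<bar> + \<bar>g y\<bar> * \<bar>f x - f y\<bar>"
      by (simp only: abs_mult)
    also have "\<dots> \<le> M1' * (L2 * S) + M2' * (L1 * S)"
      using a b by (intro add_mono mult_mono) auto
    finally show "\<bar>f x * g x - f y * g y\<bar> \<le> (M1' * L2 + M2' * L1) * S"
      by (simp add: algebra_simps)
  qed
qed

lemma box_lipschitz_cmult: "box_lipschitz D f \<Longrightarrow> box_lipschitz D (\<lambda>x. c * f x)"
  using box_lipschitz_mult[OF box_lipschitz_const] by blast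

lemma box_lipschitz_uminus: "box_lipschitz D f \<Longrightarrow> box_lipschitz D (\<lambda>x. - f x)"
  using box_lipschitz_cmult[of D f "-1"] by simp

lemma box_lipschitz_diff: "box_lipschitz D f \<Longrightarrow> box_lipschitz D g \<Longrightarrow> box_lipschitz D (\<lambda>x. f x - g x)"
  using box_lipschitz_add[of D f "\<lambda>x. - g x"] box_lipschitz_uminus[of D g] by simp

lemma box_lipschitz_sum:
  assumes "finite A" "\<And>a. a \<in> A \<Longrightarrow> box_lipschitz D (f a)"
  shows "box_lipschitz D (\<lambda>x. \<Sum>a\<in>A. f a x)"
  using assms
proof (induction A rule: finite_induct)
  case empty then show ?case by (simp add: box_lipschitz_const)
next
  case (insert a A)
  then show ?case by (simp add: box_lipschitz_add)
qed

lemma box_lipschitz_uniform: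
  assumes "finite K" "\<And>k. k \<in> K \<Longrightarrow> box_lipschitz D (f k)"
  obtains L M where "0 \<le> L" "\<And>k x y. k \<in> K \<Longrightarrow> in_box D R x \<Longrightarrow> in_box D R y \<Longrightarrow>
      \<bar>f k x\<bar> \<le> M \<and> \<bar>f k x - f k y\<bar> \<le> L * (\<Sum>j\<in>D. \<bar>x j - y j\<bar>)"
proof -
  have "\<forall>k\<in>K. \<exists>M L. 0 \<le> L \<and> (\<forall>x y. in_box D R x \<longrightarrow> in_box D R y \<longrightarrow>
      \<bar>f k x\<bar> \<le> M \<and> \<bar>f k x - f k y\<bar> \<le> L * (\<Sum>j\<in>D. \<bar>x j - y j\<bar>))"
    using assms(2) unfolding box_lipschitz_def by blast
  then obtain M L where L: "\<And>k. k \<in> K \<Longrightarrow> 0 \<le> L k"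
    and bounds: "\<And>k x y. k \<in> K \<Longrightarrow> in_box D R x \<Longrightarrow> in_box D R y \<Longrightarrow>
      \<bar>f k x\<bar> \<le> M k \<and> \<bar>f k x - f k y\<bar> \<le> L k * (\<Sum>j\<in>D. \<bar>x j - y j\<bar>)"
    by metis
  show thesis
  proof (rule that[of "\<Sum>k\<in>K. L k" "\<Sum>k\<in>K. \<bar>M k\<bar>"])
    show "0 \<le> (\<Sum>k\<in>K. L k)" using L by (simp add: sum_nonneg)
    fix k x y assume k: "k \<in> K" and xy: "in_box D R x" "in_box D R y"
    have "\<bar>M k\<bar> \<le> (\<Sum>k\<in>K. \<bar>M k\<bar>)" "L k \<le> (\<Sum>k\<in>K. L k)"
      using k assms(1) L by (auto intro: member_le_sum)
    moreover have "0 \<le> (\<Sum>j\<in>D. \<bar>x j - y j\<bar>)" by (simp add: sum_nonneg)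
    ultimately show "\<bar>f k x\<bar> \<le> (\<Sum>k\<in>K. \<bar>M k\<bar>) \<and>
        \<bar>f k x - f k y\<bar> \<le> (\<Sum>k\<in>K. L k) * (\<Sum>j\<in>D. \<bar>x j - y j\<bar>)"
      using bounds[OF k xy] by (meson abs_ge_self mult_right_mono order_trans)
  qed
qed

definition clip :: "real \<Rightarrow> ('a \<Rightarrow> real) \<Rightarrow> 'a \<Rightarrow> real" where
  "clip R x j = max (- R) (min R (x j))"

lemma in_box_clip: "0 \<le> R \<Longrightarrow> in_box D R (clip R x)"
  unfolding in_box_def clip_def by (simp add: abs_le_iff max_def min_def)

lemma clip_diff_le: "\<bar>clip R x j - clip R y j\<bar> \<le> \<bar>x j - y j\<bar>"
  unfolding clip_def by (simp add: abs_le_iff max_def min_def) linarith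

lemma clip_eq_self: "in_box D R x \<Longrightarrow> j \<in> D \<Longrightarrow> clip R x j = x j"
  unfolding in_box_def clip_def by (auto simp: abs_le_iff)

lemma sum_odd_even_pairs:
  fixes f :: "nat \<Rightarrow> 'a::comm_monoid_add" and l :: nat
  shows "(\<Sum>k=1..2*l. f k) = (\<Sum>q=1..l. f (2*q-1) + f (2*q))"
proof (induction l)
  case 0 then show ?case by simp
next
  case (Suc l)
  have "{1..2 * Suc l} = insert (2*l+2) (insert (2*l+1) {1..2*l})" by auto
  then have "(\<Sum>k=1..2*Suc l. f k) = f (2*l+2) + (f (2*l+1) + (\<Sum>k=1..2*l. f k))" by simp
  then show ?case using Suc by (simp add: add_ac)
qed

lemma mulv_Smat_odd:
  assumes "q \<in> {1..l}"
  shows "mulv (Smat z) (2*l) x (2*q-1) = z q * x (2*q)"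
proof -
  have "2*q-1 \<in> {1..2*l}" "odd (2*q-1)" "(2*q-1+1) div 2 = q" "2*q-1+1 = 2*q" using assms by auto
  then show ?thesis using mulv_Smat[of "2*q-1" l z x] by simp
qed

lemma mulv_Smat_even:
  assumes "q \<in> {1..l}"
  shows "mulv (Smat z) (2*l) x (2*q) = - (z q * x (2*q-1))"
proof -
  have "2*q \<in> {1..2*l}" using assms by auto
  then show ?thesis using mulv_Smat[of "2*q" l z x] by simp
qed

lemma box_lipschitz_mulv_Smat:
  assumes k: "k \<in> {1..2*l}" and Z: "\<And>q. q \<in> {1..l} \<Longrightarrow> box_lipschitz D (\<lambda>x. Z x q)"
    and X: "\<And>j. j \<in> {1..2*l} \<Longrightarrow> box_lipschitz D (\<lambda>x. X x j)"
  shows "box_lipschitz D (\<lambda>x. mulv (Smat (Z x)) (2*l) (X x) k)"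
proof (cases "odd k")
  case True
  then have "(k+1) div 2 \<in> {1..l}" "k + 1 \<in> {1..2*l}" using k by (auto; presburger)+
  then show ?thesis unfolding mulv_Smat[OF k] using True by (simp add: box_lipschitz_mult Z X)
next
  case False
  then have "k div 2 \<in> {1..l}" "k - 1 \<in> {1..2*l}" using k by (auto; presburger)+
  then show ?thesis unfolding mulv_Smat[OF k] using False by (simp add: box_lipschitz_mult box_lipschitz_uminus Z X)
qed

lemma box_lipschitz_mulv_phi:
  assumes q: "q \<in> {1..l}" and e: "\<And>j. j \<in> {1..2*l} \<Longrightarrow> box_lipschitz D (\<lambda>x. e x j)"
    and X: "\<And>j. j \<in> {1..2*l} \<Longrightarrow> box_lipschitz D (\<lambda>x. X x j)"
  shows "box_lipschitz D (\<lambda>x. mulv (phi (e x)) (2*l) (X x) q)"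
proof -
  have "2*q-1 \<in> {1..2*l}" "2*q \<in> {1..2*l}" using q by auto
  then show ?thesis unfolding mulv_phi[OF q] by (intro box_lipschitz_diff box_lipschitz_mult e X)
qed

locale leader_graph =
  fixes N :: nat and E :: "(nat \<times> nat) set"
  assumes E_subset: "E \<subseteq> {0..N} \<times> {0..N}"
    and spanning_tree: "contains_spanning_tree E {0..N} 0"
    and E_sym: "\<forall>i\<in>{1..N}. \<forall>j\<in>{1..N}. (i, j) \<in> E \<longleftrightarrow> (j, i) \<in> E"
begin

text \<open>With the leader's state pinned to \<open>0\<close>, \<open>lap y = - H y\<close> for the paper's matrix
  \<open>H = L + diag(a\<^sub>i\<^sub>0)\<close>, so \<open>lap_form y z = - z\<^sup>T H y\<close>; the rooted spanning tree makes \<open>H\<close>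
  positive definite.\<close>

definition with_root0 :: "(nat \<Rightarrow> real) \<Rightarrow> nat \<Rightarrow> real" where
  "with_root0 y j = (if j = 0 then 0 else y j)"

definition lap :: "(nat \<Rightarrow> real) \<Rightarrow> nat \<Rightarrow> real" where
  "lap y i = (\<Sum>j\<in>nbrs E N i. with_root0 y j - y i)"

definition lap_form :: "(nat \<Rightarrow> real) \<Rightarrow> (nat \<Rightarrow> real) \<Rightarrow> real" where
  "lap_form y z = (\<Sum>i=1..N. z i * lap y i)"

lemma nbrs_subset: "nbrs E N i \<subseteq> {0..N}" by (auto simp: nbrs_def)
lemma finite_nbrs: "finite (nbrs E N i)" by (rule finite_subset[OF nbrs_subset]) simp

lemma sum_nbrs_split: "(\<Sum>j\<in>nbrs E N i. g j) = (if (0, i) \<in> E then g 0 else 0) + (\<Sum>j=1..N. if (j, i) \<in> E then g j else 0)"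
proof -
  have "(\<Sum>j\<in>nbrs E N i. g j) = (\<Sum>j=0..N. if (j, i) \<in> E then g j else 0)"
    unfolding nbrs_def by (rule sum.inter_filter) simp
  also have "\<dots> = (if (0, i) \<in> E then g 0 else 0) + (\<Sum>j=Suc 0..N. if (j, i) \<in> E then g j else 0)"
    by (rule sum.atLeast_Suc_atMost) simp
  finally show ?thesis by simp
qed

definition root_edge :: "nat \<Rightarrow> real" where "root_edge i = (if (0, i) \<in> E then 1 else 0)"
definition indeg :: "nat \<Rightarrow> real" where "indeg i = real (card (nbrs E N i))"

lemma lap_eq_adjacency: "lap y i = (\<Sum>j=1..N. if (j, i) \<in> E then y j else 0) - indeg i * y i"
proof -
  have "lap y i = (\<Sum>j\<in>nbrs E N i. with_root0 y j) - (\<Sum>j\<in>nbrs E N i. y i)"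
    unfolding lap_def by (simp add: sum_subtractf)
  also have "(\<Sum>j\<in>nbrs E N i. with_root0 y j) = (\<Sum>j=1..N. if (j, i) \<in> E then y j else 0)"
    unfolding sum_nbrs_split by (simp add: with_root0_def, intro sum.cong) (auto simp: with_root0_def)
  also have "(\<Sum>j\<in>nbrs E N i. y i) = indeg i * y i" by (simp add: indeg_def)
  finally show ?thesis .
qed

lemma lap_form_sym: "lap_form y z = lap_form z y"
proof -
  define P :: "(nat \<Rightarrow> real) \<Rightarrow> (nat \<Rightarrow> real) \<Rightarrow> real" where "P y z = (\<Sum>i=1..N. \<Sum>j=1..N. if (j, i) \<in> E then z i * y j else 0)" for y z
  have B: "lap_form y z = P y z - (\<Sum>i=1..N. indeg i * z i * y i)" for y z
    unfolding lap_form_def lap_eq_adjacency P_def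
    by (simp add: algebra_simps sum_subtractf sum_distrib_left if_distrib cong: if_cong)
  have "P y z = (\<Sum>j=1..N. \<Sum>i=1..N. if (j, i) \<in> E then z i * y j else 0)"
    unfolding P_def by (rule sum.swap)
  also have "\<dots> = P z y"
    unfolding P_def using E_sym by (intro sum.cong refl) (auto simp: mult.commute)
  finally show ?thesis using B[of y z] B[of z y] by (simp add: mult.commute mult.left_commute)
qed

lemma lap_eq_root_edge:
  "lap y i = - root_edge i * y i + (\<Sum>j=1..N. if (j, i) \<in> E then y j - y i else 0)"
proof -
  have "lap y i = (if (0, i) \<in> E then with_root0 y 0 - y i else 0)
      + (\<Sum>j=1..N. if (j, i) \<in> E then with_root0 y j - y i else 0)"
    unfolding lap_def by (rule sum_nbrs_split)
  also have "(\<Sum>j=1..N. if (j, i) \<in> E then with_root0 y j - y i else 0)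
      = (\<Sum>j=1..N. if (j, i) \<in> E then y j - y i else 0)"
    by (intro sum.cong) (auto simp: with_root0_def)
  finally show ?thesis by (simp add: root_edge_def with_root0_def)
qed

lemma sum_edges_symmetrize:
  fixes y :: "nat \<Rightarrow> real"
  shows "(\<Sum>i=1..N. \<Sum>j=1..N. if (j, i) \<in> E then y i * (y i - y j) else 0)
    = (\<Sum>i=1..N. \<Sum>j=1..N. if (j, i) \<in> E then (y i - y j)\<^sup>2 / 2 else 0)"
  (is "?T = ?Q")
proof -
  have "?T = (\<Sum>j=1..N. \<Sum>i=1..N. if (j, i) \<in> E then y i * (y i - y j) else 0)"
    by (rule sum.swap)
  also have "\<dots> = (\<Sum>i=1..N. \<Sum>j=1..N. if (j, i) \<in> E then y j * (y j - y i) else 0)"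
    using E_sym by (intro sum.cong refl) auto
  finally have "2 * ?T = ?T + (\<Sum>i=1..N. \<Sum>j=1..N. if (j, i) \<in> E then y j * (y j - y i) else 0)"
    by simp
  also have "\<dots> = 2 * ?Q"
    unfolding sum.distrib[symmetric] sum_distrib_left
    by (intro sum.cong refl) (auto simp: power2_eq_square algebra_simps)
  finally show ?thesis by simp
qed

lemma neg_lap_form_eq:
  "- lap_form y y = (\<Sum>i=1..N. root_edge i * (y i)\<^sup>2)
    + (\<Sum>i=1..N. \<Sum>j=1..N. if (j, i) \<in> E then (y i - y j)\<^sup>2 / 2 else 0)"
proof -
  have "- (y i * lap y i) = root_edge i * (y i)\<^sup>2
      + (\<Sum>j=1..N. if (j, i) \<in> E then y i * (y i - y j) else 0)" for i
  proof -
    have "y i * (\<Sum>j=1..N. if (j, i) \<in> E then y j - y i else 0)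
        = - (\<Sum>j=1..N. if (j, i) \<in> E then y i * (y i - y j) else 0)"
      by (simp add: sum_distrib_left sum_negf[symmetric] algebra_simps if_distrib cong: if_cong)
    then show ?thesis unfolding lap_eq_root_edge by (simp add: power2_eq_square algebra_simps)
  qed
  then have "- lap_form y y = (\<Sum>i=1..N. root_edge i * (y i)\<^sup>2
      + (\<Sum>j=1..N. if (j, i) \<in> E then y i * (y i - y j) else 0))"
    unfolding lap_form_def sum_negf[symmetric] by simp
  then show ?thesis by (simp only: sum.distrib sum_edges_symmetrize)
qed

lemma lap_form_nonpos: "lap_form y y \<le> 0"
proof -
  have "0 \<le> (\<Sum>i=1..N. root_edge i * (y i)\<^sup>2)" by (intro sum_nonneg) (auto simp: root_edge_def)
  moreover have "0 \<le> (\<Sum>i=1..N. \<Sum>j=1..N. if (j, i) \<in> E then (y i - y j)\<^sup>2 / 2 else 0)"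
    by (intro sum_nonneg) auto
  ultimately show ?thesis using neg_lap_form_eq[of y] by linarith
qed

lemma sq_le_lap_form_edge:
  assumes "(j, i) \<in> E" "i \<in> {1..N}"
  shows "(with_root0 y j - y i)\<^sup>2 \<le> - 2 * lap_form y y"
proof -
  define S1 where "S1 = (\<Sum>i=1..N. root_edge i * (y i)\<^sup>2)"
  define S2 where "S2 = (\<Sum>i=1..N. \<Sum>j=1..N. if (j, i) \<in> E then (y i - y j)\<^sup>2 / 2 else 0)"
  have S1: "0 \<le> S1" unfolding S1_def by (intro sum_nonneg) (auto simp: root_edge_def)
  have S2: "0 \<le> S2" unfolding S2_def by (intro sum_nonneg) auto
  have B: "- lap_form y y = S1 + S2" unfolding S1_def S2_def by (rule neg_lap_form_eq)
  have j: "j \<in> {0..N}" using assms E_subset by auto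
  show ?thesis
  proof (cases "j = 0")
    case True
    have "root_edge i * (y i)\<^sup>2 \<le> S1" unfolding S1_def
      by (rule member_le_sum[OF assms(2)]) (auto simp: root_edge_def)
    then have "(y i)\<^sup>2 \<le> S1" using assms True by (simp add: root_edge_def)
    then show ?thesis using True S1 S2 B by (simp add: with_root0_def)
  next
    case False
    then have j1: "j \<in> {1..N}" using j by auto
    have "(if (j, i) \<in> E then (y i - y j)\<^sup>2 / 2 else 0) \<le> (\<Sum>j=1..N. if (j, i) \<in> E then (y i - y j)\<^sup>2 / 2 else 0)"
      by (rule member_le_sum[OF j1]) auto
    also have "\<dots> \<le> S2" unfolding S2_def
      by (rule member_le_sum[OF assms(2)]) (auto intro: sum_nonneg)
    finally have "(y i - y j)\<^sup>2 \<le> 2 * S2" using assms by simp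
    moreover have "(with_root0 y j - y i)\<^sup>2 = (y i - y j)\<^sup>2" using False by (simp add: with_root0_def power2_commute)
    ultimately show ?thesis using S1 S2 B by simp
  qed
qed

lemma sq_le_two_sq_diff: "(a::real)\<^sup>2 \<le> 2 * (b - a)\<^sup>2 + 2 * b\<^sup>2"
proof -
  have "2 * (b - a)\<^sup>2 + 2 * b\<^sup>2 - a\<^sup>2 = (a - 2 * b)\<^sup>2" by (simp add: power2_eq_square algebra_simps)
  moreover have "0 \<le> (a - 2 * b)\<^sup>2" by simp
  ultimately show ?thesis by linarith
qed

lemma sq_le_lap_form_path:
  assumes T: "T \<subseteq> E" "\<forall>j. (j, 0) \<notin> T" and p: "(0, i) \<in> T\<^sup>*"
  shows "\<exists>c\<ge>0. \<forall>y. (with_root0 y i)\<^sup>2 \<le> c * (- lap_form y y)"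
  using p
proof (induction rule: rtrancl_induct)
  case base
  show ?case by (rule exI[of _ 0]) (simp add: with_root0_def)
next
  case (step j i)
  obtain c where c: "c \<ge> 0" "\<And>y. (with_root0 y j)\<^sup>2 \<le> c * (- lap_form y y)" using step.IH by blast
  have E: "(j, i) \<in> E" using step.hyps T by auto
  have i0: "i \<noteq> 0" using step.hyps(2) T(2) by metis
  then have i: "i \<in> {1..N}" using E E_subset by auto
  show ?case
  proof (rule exI[of _ "4 + 2 * c"], intro conjI allI)
    show "0 \<le> 4 + 2 * c" using c by simp
    fix y
    have "(with_root0 y i)\<^sup>2 = (y i)\<^sup>2" using i0 by (simp add: with_root0_def)
    also have "\<dots> \<le> 2 * (with_root0 y j - y i)\<^sup>2 + 2 * (with_root0 y j)\<^sup>2" by (rule sq_le_two_sq_diff)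
    also have "\<dots> \<le> 2 * (- 2 * lap_form y y) + 2 * (c * (- lap_form y y))"
      using sq_le_lap_form_edge[OF E i, of y] c(2)[of y] by linarith
    also have "\<dots> = (4 + 2 * c) * (- lap_form y y)" by (simp add: algebra_simps)
    finally show "(with_root0 y i)\<^sup>2 \<le> (4 + 2 * c) * (- lap_form y y)" .
  qed
qed

lemma lap_form_coercive: "\<exists>c\<ge>0. \<forall>y. \<forall>i\<in>{1..N}. (y i)\<^sup>2 \<le> c * (- lap_form y y)"
proof -
  obtain T where T: "T \<subseteq> E" "rooted_spanning_tree 0 {0..N} T"
    using spanning_tree unfolding contains_spanning_tree_def by blast
  have T0: "\<forall>j. (j, 0) \<notin> T" and Tr: "\<forall>i\<in>{0..N}. (0, i) \<in> T\<^sup>*"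
    using T(2) unfolding rooted_spanning_tree_def by auto
  have "\<forall>i\<in>{1..N}. \<exists>c. c \<ge> 0 \<and> (\<forall>y. (with_root0 y i)\<^sup>2 \<le> c * (- lap_form y y))"
    using sq_le_lap_form_path[OF T(1) T0] Tr by auto
  then obtain cf where cf: "\<forall>i\<in>{1..N}. cf i \<ge> 0 \<and> (\<forall>y. (with_root0 y i)\<^sup>2 \<le> cf i * (- lap_form y y))"
    by (rule bchoice[elim_format]) blast
  show ?thesis
  proof (rule exI[of _ "\<Sum>i=1..N. cf i"], intro conjI allI ballI)
    show "0 \<le> (\<Sum>i=1..N. cf i)" using cf by (intro sum_nonneg) auto
    fix y i assume i: "i \<in> {1..N}"
    have Q: "0 \<le> - lap_form y y" using lap_form_nonpos[of y] by simp
    have "(y i)\<^sup>2 = (with_root0 y i)\<^sup>2" using i by (simp add: with_root0_def)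
    also have "\<dots> \<le> cf i * (- lap_form y y)" using cf i by blast
    also have "\<dots> \<le> (\<Sum>i=1..N. cf i) * (- lap_form y y)"
      by (rule mult_right_mono[OF _ Q], rule member_le_sum[OF i]) (use cf in auto)
    finally show "(y i)\<^sup>2 \<le> (\<Sum>i=1..N. cf i) * (- lap_form y y)" .
  qed
qed

lemma with_root0_has_derivative:
  assumes "j \<in> {0..N}" "\<And>i. i \<in> {1..N} \<Longrightarrow> ((\<lambda>s. y s i) has_real_derivative y' i) (at t within S)"
  shows "((\<lambda>s. with_root0 (y s) j) has_real_derivative with_root0 y' j) (at t within S)"
proof (cases "j = 0")
  case True then show ?thesis by (simp add: with_root0_def)
next
  case False then show ?thesis using assms by (simp add: with_root0_def)
qed

lemma lap_has_derivative:
  assumes "i \<in> {1..N}" "\<And>i. i \<in> {1..N} \<Longrightarrow> ((\<lambda>s. y s i) has_real_derivative y' i) (at t within S)"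
  shows "((\<lambda>s. lap (y s) i) has_real_derivative lap y' i) (at t within S)"
  unfolding lap_def
proof (rule DERIV_sum)
  fix j assume "j \<in> nbrs E N i"
  then have j: "j \<in> {0..N}" using nbrs_subset by blast
  show "((\<lambda>s. with_root0 (y s) j - y s i) has_real_derivative with_root0 y' j - y' i) (at t within S)"
    by (intro DERIV_diff with_root0_has_derivative[OF j] assms) (use assms in auto)
qed

lemma lap_form_has_derivative:
  assumes "\<And>i. i \<in> {1..N} \<Longrightarrow> ((\<lambda>s. y s i) has_real_derivative y' i) (at t within S)"
    and "\<And>i. i \<in> {1..N} \<Longrightarrow> ((\<lambda>s. z s i) has_real_derivative z' i) (at t within S)"
  shows "((\<lambda>s. lap_form (y s) (z s)) has_real_derivative lap_form y' (z t) + lap_form (y t) z') (at t within S)"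
proof -
  have "((\<lambda>s. lap_form (y s) (z s)) has_real_derivative (\<Sum>i=1..N. z' i * lap (y t) i + lap y' i * z t i)) (at t within S)"
    unfolding lap_form_def
  proof (rule DERIV_sum)
    fix i assume i: "i \<in> {1..N}"
    show "((\<lambda>s. z s i * lap (y s) i) has_real_derivative z' i * lap (y t) i + lap y' i * z t i) (at t within S)"
      by (rule DERIV_mult[OF assms(2)[OF i] lap_has_derivative[OF i assms(1)]])
  qed
  moreover have "(\<Sum>i=1..N. z' i * lap (y t) i + lap y' i * z t i) = lap_form y' (z t) + lap_form (y t) z'"
    unfolding lap_form_def by (simp add: sum.distrib mult.commute)
  ultimately show ?thesis by simp
qed

lemma lap_form_cong:
  assumes "\<And>i. i \<in> {0..N} \<Longrightarrow> y i = y' i" "\<And>i. i \<in> {1..N} \<Longrightarrow> z i = z' i"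
  shows "lap_form y z = lap_form y' z'"
proof -
  have "lap y i = lap y' i" if i: "i \<in> {1..N}" for i
    unfolding lap_def
  proof (intro sum.cong refl)
    fix j assume "j \<in> nbrs E N i"
    then have "j \<in> {0..N}" using nbrs_subset by blast
    then show "with_root0 y j - y i = with_root0 y' j - y' i" using assms(1) i by (auto simp: with_root0_def)
  qed
  then show ?thesis unfolding lap_form_def using assms(2) by (intro sum.cong refl) auto
qed

end

locale compensator = leader_graph N E for N E +
  fixes l :: nat and w :: "nat \<Rightarrow> real" and mu1 mu2 :: real
  assumes mu1_pos: "0 < mu1" and mu2_pos: "0 < mu2"
begin

text \<open>The closed loop is one ODE for a state \<open>x\<close> with \<open>x (0, k) = v\<^sub>k\<close>,
  \<open>x (i, k) = \<eta>\<^sub>i\<^sub>,\<^sub>k\<close> and \<open>x (N + i, q) = \<omega>\<^sub>i\<^sub>,\<^sub>q\<close>; \<open>err x k\<close> is the \<open>k\<close>-th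
  coordinate of the tracking error \<open>\<eta>\<^sub>i - v\<close>.\<close>

definition state_idx :: "(nat \<times> nat) set" where
  "state_idx = ({0..N} \<times> {1..2*l}) \<union> ({N+1..2*N} \<times> {1..l})"

definition disagree :: "(nat \<times> nat \<Rightarrow> real) \<Rightarrow> nat \<Rightarrow> nat \<Rightarrow> real" where
  "disagree x i k = (\<Sum>j\<in>nbrs E N i. x (j, k) - x (i, k))"

definition vfield :: "(nat \<times> nat \<Rightarrow> real) \<Rightarrow> nat \<times> nat \<Rightarrow> real" where
  "vfield x p = (if fst p = 0 then mulv (Smat w) (2*l) (\<lambda>q. x (0, q)) (snd p)
     else if fst p \<le> N then mulv (Smat (\<lambda>q. x (N + fst p, q))) (2*l) (\<lambda>q. x (fst p, q)) (snd p)
        + mu1 * disagree x (fst p) (snd p)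
     else mu2 * mulv (phi (\<lambda>k. disagree x (fst p - N) k)) (2*l) (\<lambda>q. x (fst p - N, q)) (snd p))"

definition err :: "(nat \<times> nat \<Rightarrow> real) \<Rightarrow> nat \<Rightarrow> nat \<Rightarrow> real" where
  "err x k = (\<lambda>i. x (i, k) - x (0, k))"

lemma finite_state_idx: "finite state_idx"
  unfolding state_idx_def by auto

lemma state_idx_cases:
  assumes "p \<in> state_idx"
  obtains (leader) k where "p = (0, k)" "k \<in> {1..2*l}"
    | (follower) i k where "p = (i, k)" "i \<in> {1..N}" "k \<in> {1..2*l}"
    | (gain) i q where "p = (N + i, q)" "i \<in> {1..N}" "q \<in> {1..l}"
proof -
  obtain i k where p: "p = (i, k)" by fastforce
  consider "i = 0" | "i \<in> {1..N}" | "N < i" by fastforce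
  then show thesis
  proof cases
    case 3
    then have "p = (N + (i - N), k)" "i - N \<in> {1..N}" "k \<in> {1..l}"
      using assms p by (auto simp: state_idx_def)
    then show thesis by (rule gain)
  qed (use assms p leader follower in \<open>auto simp: state_idx_def\<close>)
qed

lemma vfield_leader: "vfield x (0, k) = mulv (Smat w) (2*l) (\<lambda>q. x (0, q)) k"
  by (simp add: vfield_def)

lemma vfield_follower:
  "i \<in> {1..N} \<Longrightarrow> vfield x (i, k)
    = mulv (Smat (\<lambda>q. x (N + i, q))) (2*l) (\<lambda>q. x (i, q)) k + mu1 * disagree x i k"
  by (simp add: vfield_def)

lemma vfield_gain:
  "i \<in> {1..N} \<Longrightarrow> vfield x (N + i, q) = mu2 * mulv (phi (disagree x i)) (2*l) (\<lambda>k. x (i, k)) q"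
  by (simp add: vfield_def)

lemma vfield_components:
  assumes q: "q \<in> {1..l}"
  shows "vfield x (0, 2*q-1) = w q * x (0, 2*q)"
    and "vfield x (0, 2*q) = - (w q * x (0, 2*q-1))"
    and "i \<in> {1..N} \<Longrightarrow> vfield x (i, 2*q-1) = x (N+i, q) * x (i, 2*q) + mu1 * disagree x i (2*q-1)"
    and "i \<in> {1..N} \<Longrightarrow> vfield x (i, 2*q) = - (x (N+i, q) * x (i, 2*q-1)) + mu1 * disagree x i (2*q)"
    and "i \<in> {1..N} \<Longrightarrow>
      vfield x (N+i, q) = mu2 * (disagree x i (2*q-1) * x (i, 2*q) - disagree x i (2*q) * x (i, 2*q-1))"
  by (simp_all only: vfield_leader vfield_follower vfield_gain mulv_Smat_odd[OF q]
      mulv_Smat_even[OF q] mulv_phi[OF q])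

lemma lap_err: "i \<in> {1..N} \<Longrightarrow> lap (err x k) i = disagree x i k"
  unfolding lap_def disagree_def
  by (intro sum.cong refl) (auto simp: with_root0_def err_def)

lemma lap_form_err: "lap_form (err x k) (err y k) = (\<Sum>i=1..N. (y (i, k) - y (0, k)) * disagree x i k)"
  unfolding lap_form_def by (intro sum.cong refl) (subst lap_err, auto simp: err_def)

lemma box_lipschitz_disagree:
  assumes "i \<in> {0..N}" "k \<in> {1..2*l}"
  shows "box_lipschitz state_idx (\<lambda>x. disagree x i k)"
  unfolding disagree_def
proof (rule box_lipschitz_sum[OF finite_nbrs])
  fix j assume "j \<in> nbrs E N i"
  then have "j \<in> {0..N}" using nbrs_subset by blast
  then have "(j, k) \<in> state_idx" "(i, k) \<in> state_idx" using assms by (auto simp: state_idx_def)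
  then show "box_lipschitz state_idx (\<lambda>x. x (j, k) - x (i, k))" by (intro box_lipschitz_diff box_lipschitz_coord finite_state_idx)
qed

lemma box_lipschitz_state_coord: "j \<in> state_idx \<Longrightarrow> box_lipschitz state_idx (\<lambda>x. x j)"
  by (rule box_lipschitz_coord[OF finite_state_idx])

lemma box_lipschitz_vfield:
  assumes "p \<in> state_idx"
  shows "box_lipschitz state_idx (\<lambda>x. vfield x p)"
  using assms
proof (cases rule: state_idx_cases)
  case (leader k)
  then show ?thesis unfolding leader(1) vfield_leader
    by (intro box_lipschitz_mulv_Smat box_lipschitz_const box_lipschitz_state_coord)
      (auto simp: state_idx_def)
next
  case (follower i k)
  then show ?thesis unfolding follower(1) vfield_follower[OF follower(2)]
    by (intro box_lipschitz_add box_lipschitz_mulv_Smat box_lipschitz_cmult box_lipschitz_disagree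
        box_lipschitz_state_coord) (auto simp: state_idx_def)
next
  case (gain i q)
  then show ?thesis unfolding gain(1) vfield_gain[OF gain(2)]
    by (intro box_lipschitz_cmult box_lipschitz_mulv_phi box_lipschitz_disagree
        box_lipschitz_state_coord) (auto simp: state_idx_def)
qed

lemma vfield_cong:
  assumes "\<And>j. j \<in> state_idx \<Longrightarrow> x j = y j" "p \<in> state_idx"
  shows "vfield x p = vfield y p"
proof -
  define R where "R = (\<Sum>j\<in>state_idx. \<bar>x j\<bar> + \<bar>y j\<bar>)"
  have bx: "in_box state_idx R x" "in_box state_idx R y" unfolding in_box_def R_def
    by (auto intro!: member_le_sum[OF _ _ finite_state_idx] order_trans[OF _ member_le_sum[OF _ _ finite_state_idx]])
  obtain M L where "0 \<le> L" "\<And>x y. in_box state_idx R x \<Longrightarrow> in_box state_idx R y \<Longrightarrow>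
      \<bar>vfield x p\<bar> \<le> M \<and> \<bar>vfield x p - vfield y p\<bar> \<le> L * (\<Sum>j\<in>state_idx. \<bar>x j - y j\<bar>)"
    using box_lipschitzE[OF box_lipschitz_vfield[OF assms(2)], where R=R] by metis
  then have "\<bar>vfield x p - vfield y p\<bar> \<le> L * (\<Sum>j\<in>state_idx. \<bar>x j - y j\<bar>)" using bx by blast
  also have "(\<Sum>j\<in>state_idx. \<bar>x j - y j\<bar>) = 0" using assms(1) by simp
  finally show ?thesis by simp
qed

text \<open>The term \<open>|v|\<^sup>2\<close> is constant along solutions (\<open>S(\<omega>)\<close> is skew); it is there only to
  make the sublevel sets bounded.\<close>

definition lyap :: "(nat \<times> nat \<Rightarrow> real) \<Rightarrow> real" where
  "lyap x = (\<Sum>k=1..2*l. (x (0, k))\<^sup>2) + (1/2) * (\<Sum>k=1..2*l. - lap_form (err x k) (err x k))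
     + (1 / (2 * mu2)) * (\<Sum>i=1..N. \<Sum>q=1..l. (x (N + i, q) - w q)\<^sup>2)"

definition leader_energy :: "(nat \<times> nat \<Rightarrow> real) \<Rightarrow> real" where
  "leader_energy x = (\<Sum>k=1..2*l. (x (0, k))\<^sup>2)"

definition err_energy :: "(nat \<times> nat \<Rightarrow> real) \<Rightarrow> real" where
  "err_energy x = (\<Sum>k=1..2*l. - lap_form (err x k) (err x k))"

definition gain_energy :: "(nat \<times> nat \<Rightarrow> real) \<Rightarrow> real" where
  "gain_energy x = (\<Sum>i=1..N. \<Sum>q=1..l. (x (N + i, q) - w q)\<^sup>2)"

lemma lyap_eq_energies: "lyap x = leader_energy x + err_energy x / 2 + gain_energy x / (2 * mu2)"
  by (simp add: lyap_def leader_energy_def err_energy_def gain_energy_def)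

lemma energies_nonneg:
  shows "0 \<le> leader_energy x" and "0 \<le> err_energy x" and "0 \<le> gain_energy x / (2 * mu2)"
  using lap_form_nonpos mu2_pos
  by (auto simp: leader_energy_def err_energy_def gain_energy_def intro!: sum_nonneg divide_nonneg_pos)

lemma lyap_nonneg: "0 \<le> lyap x"
  using energies_nonneg[of x] by (simp add: lyap_eq_energies)

lemma leader_sq_le_lyap:
  assumes "k \<in> {1..2*l}"
  shows "(x (0, k))\<^sup>2 \<le> lyap x"
proof -
  have "(x (0, k))\<^sup>2 \<le> leader_energy x"
    unfolding leader_energy_def by (rule member_le_sum[OF assms]) auto
  then show ?thesis using energies_nonneg[of x] by (simp add: lyap_eq_energies)
qed

lemma err_sq_le_lyap:
  obtains c where "0 \<le> c"
    "\<And>x i k. i \<in> {1..N} \<Longrightarrow> k \<in> {1..2*l} \<Longrightarrow> (err x k i)\<^sup>2 \<le> c * lyap x"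
proof -
  obtain c where "c \<ge> 0" and c: "\<And>y i. i \<in> {1..N} \<Longrightarrow> (y i)\<^sup>2 \<le> c * (- lap_form y y)"
    using lap_form_coercive by blast
  have "(err x k i)\<^sup>2 \<le> (2 * c) * lyap x" if "i \<in> {1..N}" "k \<in> {1..2*l}" for x i k
  proof -
    have "- lap_form (err x k) (err x k) \<le> err_energy x"
      unfolding err_energy_def by (rule member_le_sum[OF that(2)]) (use lap_form_nonpos in auto)
    also have "\<dots> \<le> 2 * lyap x" using energies_nonneg[of x] by (simp add: lyap_eq_energies)
    finally have "c * (- lap_form (err x k) (err x k)) \<le> c * (2 * lyap x)"
      using \<open>c \<ge> 0\<close> by (rule mult_left_mono)
    then show ?thesis using c[OF that(1), of "err x k"] by simp
  qed
  then show thesis using that[of "2 * c"] \<open>c \<ge> 0\<close> by simp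
qed

lemma gain_sq_le_lyap:
  assumes "i \<in> {1..N}" "q \<in> {1..l}"
  shows "(x (N + i, q) - w q)\<^sup>2 \<le> 2 * mu2 * lyap x"
proof -
  have "(x (N + i, q) - w q)\<^sup>2 \<le> (\<Sum>q=1..l. (x (N + i, q) - w q)\<^sup>2)"
    by (rule member_le_sum[OF assms(2)]) auto
  also have "\<dots> \<le> gain_energy x"
    unfolding gain_energy_def by (rule member_le_sum[OF assms(1)]) (auto intro: sum_nonneg)
  also have "\<dots> = 2 * mu2 * (gain_energy x / (2 * mu2))" using mu2_pos by simp
  also have "\<dots> \<le> 2 * mu2 * lyap x"
    using energies_nonneg[of x] mu2_pos by (intro mult_left_mono) (auto simp: lyap_eq_energies)
  finally show ?thesis .
qed

lemma lyap_sublevel_bounded: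
  obtains B where "\<And>x. lyap x \<le> C \<Longrightarrow> in_box state_idx B x"
proof -
  obtain c where "0 \<le> c" and c: "\<And>x i k. i \<in> {1..N} \<Longrightarrow> k \<in> {1..2*l} \<Longrightarrow> (err x k i)\<^sup>2 \<le> c * lyap x"
    using err_sq_le_lyap by blast
  define W where "W = (\<Sum>q=1..l. \<bar>w q\<bar>)"
  have "in_box state_idx ((c * C + 1) + (C + 1) + (2 * mu2 * C + 1) + W) x" if "lyap x \<le> C" for x
    unfolding in_box_def
  proof
    have "0 \<le> C" "0 \<le> W" using lyap_nonneg[of x] that by (auto simp: W_def intro: sum_nonneg)
    then have nonneg: "0 \<le> c * C" "0 \<le> 2 * mu2 * C" using \<open>0 \<le> c\<close> mu2_pos by auto
    have leader_bound: "\<bar>x (0, k)\<bar> \<le> C + 1" if "k \<in> {1..2*l}" for k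
      using leader_sq_le_lyap[of k x] that \<open>lyap x \<le> C\<close> by (intro abs_le_if_sq_le) simp
    fix p assume "p \<in> state_idx"
    then show "\<bar>x p\<bar> \<le> (c * C + 1) + (C + 1) + (2 * mu2 * C + 1) + W"
    proof (cases rule: state_idx_cases)
      case (leader k)
      then show ?thesis using leader_bound[OF leader(2)] nonneg \<open>0 \<le> W\<close>
        by (simp only: leader(1))
    next
      case (follower i k)
      have "\<bar>err x k i\<bar> \<le> c * C + 1"
        using c[OF follower(2,3), of x] \<open>lyap x \<le> C\<close> \<open>0 \<le> c\<close>
        by (intro abs_le_if_sq_le) (meson mult_left_mono order_trans)
      then show ?thesis using leader_bound[OF follower(3)] nonneg \<open>0 \<le> W\<close>
        by (simp only: follower(1) err_def abs_le_iff) linarith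
    next
      case (gain i q)
      have "\<bar>x (N + i, q) - w q\<bar> \<le> 2 * mu2 * C + 1"
        using gain_sq_le_lyap[OF gain(2,3), of x] \<open>lyap x \<le> C\<close> mu2_pos
        by (intro abs_le_if_sq_le) (simp add: order_trans)
      moreover have "\<bar>w q\<bar> \<le> W" unfolding W_def by (rule member_le_sum[OF gain(3)]) auto
      ultimately show ?thesis using nonneg \<open>0 \<le> C\<close>
        by (simp only: gain(1) abs_le_iff) linarith
    qed
  qed
  then show thesis by (rule that)
qed

definition lyap_deriv :: "(nat \<times> nat \<Rightarrow> real) \<Rightarrow> (nat \<times> nat \<Rightarrow> real) \<Rightarrow> real" where
  "lyap_deriv x x' = (\<Sum>k=1..2*l. 2 * x (0, k) * x' (0, k))
     + (1/2) * (\<Sum>k=1..2*l. - (lap_form (err x' k) (err x k) + lap_form (err x k) (err x' k)))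
     + (1 / (2 * mu2)) * (\<Sum>i=1..N. \<Sum>q=1..l. 2 * (x (N + i, q) - w q) * x' (N + i, q))"

lemma lyap_has_derivative:
  assumes d: "\<And>j. j \<in> state_idx \<Longrightarrow> ((\<lambda>s. X s j) has_real_derivative X' j) (at t within S)"
  shows "((\<lambda>s. lyap (X s)) has_real_derivative lyap_deriv (X t) X') (at t within S)"
proof -
  have d1: "((\<lambda>s. \<Sum>k=1..2*l. (X s (0, k))\<^sup>2) has_real_derivative (\<Sum>k=1..2*l. 2 * X t (0, k) * X' (0, k))) (at t within S)"
    by (intro DERIV_sum has_real_derivative_power2 d) (auto simp: state_idx_def)
  have dy: "((\<lambda>s. err (X s) k i) has_real_derivative err X' k i) (at t within S)"
    if "k \<in> {1..2*l}" "i \<in> {1..N}" for k i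
    unfolding err_def using that by (intro DERIV_diff d) (auto simp: state_idx_def)
  have d2: "((\<lambda>s. \<Sum>k=1..2*l. - lap_form (err (X s) k) (err (X s) k)) has_real_derivative
      (\<Sum>k=1..2*l. - (lap_form (err X' k) (err (X t) k) + lap_form (err (X t) k) (err X' k)))) (at t within S)"
    by (intro DERIV_sum DERIV_minus lap_form_has_derivative dy) auto
  have d3: "((\<lambda>s. \<Sum>i=1..N. \<Sum>q=1..l. (X s (N + i, q) - w q)\<^sup>2) has_real_derivative
      (\<Sum>i=1..N. \<Sum>q=1..l. 2 * (X t (N + i, q) - w q) * X' (N + i, q))) (at t within S)"
  proof (intro DERIV_sum)
    fix i q assume "i \<in> {1..N}" "q \<in> {1..l}"
    then have "((\<lambda>s. X s (N + i, q) - w q) has_real_derivative X' (N + i, q) - 0) (at t within S)"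
      by (intro DERIV_diff d DERIV_const) (auto simp: state_idx_def)
    then show "((\<lambda>s. (X s (N + i, q) - w q)\<^sup>2) has_real_derivative 2 * (X t (N + i, q) - w q) * X' (N + i, q)) (at t within S)"
      using has_real_derivative_power2 by fastforce
  qed
  show ?thesis
    unfolding lyap_def lyap_deriv_def
    by (intro DERIV_add DERIV_cmult d1 d2 d3)
qed

lemma lyap_deriv_cong:
  assumes "\<And>j. j \<in> state_idx \<Longrightarrow> x' j = x'' j"
  shows "lyap_deriv x x' = lyap_deriv x x''"
proof -
  have y: "err x' k i = err x'' k i" if "k \<in> {1..2*l}" "i \<in> {0..N}" for k i
    unfolding err_def using assms that by (auto simp: state_idx_def)
  show ?thesis
    unfolding lyap_deriv_def
    by (intro arg_cong2[where f="(+)"] arg_cong2[where f="(*)"] refl sum.cong arg_cong[where f=uminus]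
        lap_form_cong y) (use assms in \<open>auto simp: state_idx_def\<close>)
qed

lemma leader_vfield_orthogonal: "(\<Sum>k=1..2*l. 2 * x (0, k) * vfield x (0, k)) = 0"
  unfolding sum_odd_even_pairs
proof (intro sum.neutral ballI)
  fix q assume q: "q \<in> {1..l}"
  show "2 * x (0, 2*q-1) * vfield x (0, 2*q-1) + 2 * x (0, 2*q) * vfield x (0, 2*q) = 0"
    unfolding vfield_components(1,2)[OF q] by (simp add: algebra_simps)
qed

text \<open>Per follower and frequency, the error dynamics split into a term cancelled by the
  adaptation law, a rotation term with weight \<open>w q\<close>, and the dissipation.\<close>

lemma err_vfield_pair_eq:
  assumes "i \<in> {1..N}" "q \<in> {1..l}"
  shows "(vfield x (i, 2*q-1) - vfield x (0, 2*q-1)) * disagree x i (2*q-1)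
      + (vfield x (i, 2*q) - vfield x (0, 2*q)) * disagree x i (2*q)
    = (x (N+i, q) - w q) * (disagree x i (2*q-1) * x (i, 2*q) - disagree x i (2*q) * x (i, 2*q-1))
      + w q * (err x (2*q) i * disagree x i (2*q-1) - err x (2*q-1) i * disagree x i (2*q))
      + mu1 * ((disagree x i (2*q-1))\<^sup>2 + (disagree x i (2*q))\<^sup>2)"
  unfolding vfield_components(1,2)[OF assms(2)] vfield_components(3,4)[OF assms(2,1)]
  by (simp add: err_def power2_eq_square algebra_simps)

lemma rotation_terms_cancel:
  "(\<Sum>i=1..N. \<Sum>q=1..l. w q * (err x (2*q) i * disagree x i (2*q-1)
      - err x (2*q-1) i * disagree x i (2*q))) = 0"
proof -
  have "(\<Sum>i=1..N. w q * (err x (2*q) i * disagree x i (2*q-1) - err x (2*q-1) i * disagree x i (2*q)))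
      = 0" for q
  proof -
    have "(\<Sum>i=1..N. w q * (err x (2*q) i * disagree x i (2*q-1) - err x (2*q-1) i * disagree x i (2*q)))
        = w q * (lap_form (err x (2*q-1)) (err x (2*q)) - lap_form (err x (2*q)) (err x (2*q-1)))"
      unfolding lap_form_def right_diff_distrib sum_subtractf sum_distrib_left
      by (intro arg_cong2[where f="(-)"] sum.cong refl) (auto simp: lap_err)
    then show ?thesis using lap_form_sym[of "err x (2*q-1)" "err x (2*q)"] by simp
  qed
  then show ?thesis by (subst sum.swap) simp
qed

definition disagree_energy :: "(nat \<times> nat \<Rightarrow> real) \<Rightarrow> real" where
  "disagree_energy x = (\<Sum>k=1..2*l. \<Sum>i=1..N. (disagree x i k)\<^sup>2)"

lemma lyap_deriv_vfield: "lyap_deriv x (vfield x) = - mu1 * disagree_energy x"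
proof -
  define e where "e = disagree x"
  define P where "P i q = (x (N+i, q) - w q) * (e i (2*q-1) * x (i, 2*q) - e i (2*q) * x (i, 2*q-1))"
    for i q
  define Wt where "Wt i q = w q * (err x (2*q) i * e i (2*q-1) - err x (2*q-1) i * e i (2*q))" for i q
  define Mu where "Mu i q = mu1 * ((e i (2*q-1))\<^sup>2 + (e i (2*q))\<^sup>2)" for i q
  have "lap_form (err (vfield x) k) (err x k) + lap_form (err x k) (err (vfield x) k)
      = 2 * (\<Sum>i=1..N. (vfield x (i, k) - vfield x (0, k)) * e i k)" for k
    using lap_form_sym[of "err (vfield x) k" "err x k"] by (simp add: lap_form_err e_def)
  then have "(1/2) * (\<Sum>k=1..2*l. - (lap_form (err (vfield x) k) (err x k)
      + lap_form (err x k) (err (vfield x) k)))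
    = - (\<Sum>k=1..2*l. \<Sum>i=1..N. (vfield x (i, k) - vfield x (0, k)) * e i k)"
    by (simp add: sum_negf sum_distrib_left[symmetric] mult.commute)
  also have "\<dots> = - (\<Sum>i=1..N. \<Sum>k=1..2*l. (vfield x (i, k) - vfield x (0, k)) * e i k)"
    by (subst sum.swap) (rule refl)
  also have "\<dots> = - (\<Sum>i=1..N. \<Sum>q=1..l. P i q + Wt i q + Mu i q)"
    unfolding sum_odd_even_pairs P_def Wt_def Mu_def e_def
    by (intro arg_cong[where f=uminus] sum.cong refl err_vfield_pair_eq) auto
  finally have err_part: "(1/2) * (\<Sum>k=1..2*l. - (lap_form (err (vfield x) k) (err x k)
      + lap_form (err x k) (err (vfield x) k))) = - (\<Sum>i=1..N. \<Sum>q=1..l. P i q + Wt i q + Mu i q)" .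
  have "(\<Sum>i=1..N. \<Sum>q=1..l. Wt i q) = 0"
    unfolding Wt_def e_def by (rule rotation_terms_cancel)
  moreover have "(1 / (2 * mu2)) * (\<Sum>i=1..N. \<Sum>q=1..l. 2 * (x (N + i, q) - w q) * vfield x (N + i, q))
    = (\<Sum>i=1..N. \<Sum>q=1..l. P i q)"
  proof -
    have "(\<Sum>i=1..N. \<Sum>q=1..l. 2 * (x (N + i, q) - w q) * vfield x (N + i, q))
        = (\<Sum>i=1..N. \<Sum>q=1..l. (2 * mu2) * P i q)"
      unfolding P_def e_def by (intro sum.cong refl) (simp add: vfield_components(5))
    then show ?thesis using mu2_pos by (simp add: sum_distrib_left[symmetric])
  qed
  moreover have "(\<Sum>i=1..N. \<Sum>q=1..l. Mu i q) = mu1 * disagree_energy x"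
  proof -
    have "disagree_energy x = (\<Sum>i=1..N. \<Sum>k=1..2*l. (e i k)\<^sup>2)"
      unfolding disagree_energy_def e_def by (rule sum.swap)
    also have "\<dots> = (\<Sum>i=1..N. \<Sum>q=1..l. (e i (2*q-1))\<^sup>2 + (e i (2*q))\<^sup>2)"
      unfolding sum_odd_even_pairs ..
    finally show ?thesis unfolding Mu_def by (simp add: sum_distrib_left)
  qed
  ultimately show ?thesis
    unfolding lyap_deriv_def leader_vfield_orthogonal err_part by (simp add: sum.distrib)
qed

lemma lyap_deriv_vfield_nonpos: "lyap_deriv x (vfield x) \<le> 0"
  using mu1_pos by (simp add: lyap_deriv_vfield disagree_energy_def sum_nonneg)

definition is_solution :: "(real \<Rightarrow> nat \<times> nat \<Rightarrow> real) \<Rightarrow> bool" where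
  "is_solution X \<longleftrightarrow>
    (\<forall>t\<ge>0. \<forall>j\<in>state_idx. ((\<lambda>s. X s j) has_real_derivative vfield (X t) j) (at t within {0..}))"

lemma vfield_box_bounds:
  obtains L M where "0 \<le> L" "\<And>j x y. j \<in> state_idx \<Longrightarrow> in_box state_idx R x \<Longrightarrow>
      in_box state_idx R y \<Longrightarrow> \<bar>vfield x j\<bar> \<le> M \<and> \<bar>vfield x j - vfield y j\<bar> \<le> L * (\<Sum>i\<in>state_idx. \<bar>x i - y i\<bar>)"
  using box_lipschitz_uniform[where K=state_idx and f="\<lambda>j x. vfield x j" and D=state_idx and R=R,
      OF finite_state_idx box_lipschitz_vfield] by blast

lemma lipschitz_field_clipped_vfield:
  assumes "0 \<le> R"
  obtains L M where "lipschitz_field (\<lambda>x. vfield (clip R x)) state_idx L M"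
proof -
  obtain L M where "0 \<le> L" and bounds: "\<And>j x y. j \<in> state_idx \<Longrightarrow> in_box state_idx R x \<Longrightarrow>
      in_box state_idx R y \<Longrightarrow> \<bar>vfield x j\<bar> \<le> M \<and> \<bar>vfield x j - vfield y j\<bar> \<le> L * (\<Sum>i\<in>state_idx. \<bar>x i - y i\<bar>)"
    using vfield_box_bounds by blast
  have "lipschitz_field (\<lambda>x. vfield (clip R x)) state_idx L M"
  proof (unfold_locales)
    fix x :: "nat \<times> nat \<Rightarrow> real" and k assume "k \<in> state_idx"
    show "\<bar>vfield (clip R x) k\<bar> \<le> M"
      using bounds[OF \<open>k \<in> state_idx\<close> in_box_clip[OF assms] in_box_clip[OF assms]] by blast
  next
    fix x y :: "nat \<times> nat \<Rightarrow> real" and k assume "k \<in> state_idx"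
    have "\<bar>vfield (clip R x) k - vfield (clip R y) k\<bar> \<le> L * (\<Sum>i\<in>state_idx. \<bar>clip R x i - clip R y i\<bar>)"
      using bounds[OF \<open>k \<in> state_idx\<close> in_box_clip[OF assms] in_box_clip[OF assms]] by blast
    also have "\<dots> \<le> L * (\<Sum>i\<in>state_idx. \<bar>x i - y i\<bar>)"
      by (intro mult_left_mono[OF _ \<open>0 \<le> L\<close>] sum_mono clip_diff_le)
    finally show "\<bar>vfield (clip R x) k - vfield (clip R y) k\<bar> \<le> L * (\<Sum>i\<in>state_idx. \<bar>x i - y i\<bar>)" .
  qed (use finite_state_idx \<open>0 \<le> L\<close> in auto)
  then show thesis by (rule that)
qed

text \<open>Global existence: solve the ODE with the field clipped outside a box containing the
  sublevel set \<open>{lyap \<le> lyap x0 + 1}\<close>; on that set the clipping is inactive and \<open>lyap\<close> is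
  nonincreasing, so the solution never leaves \<open>{lyap \<le> lyap x0}\<close>.\<close>

lemma solution_exists: "\<exists>X. X 0 = x0 \<and> is_solution X"
proof -
  obtain B where B: "\<And>x. lyap x \<le> lyap x0 + 1 \<Longrightarrow> in_box state_idx B x"
    using lyap_sublevel_bounded by blast
  define R where "R = max B 0"
  have R: "0 \<le> R" "\<And>x. lyap x \<le> lyap x0 + 1 \<Longrightarrow> in_box state_idx R x"
    using B unfolding R_def in_box_def by (auto intro: max.coboundedI1)
  obtain L M where "lipschitz_field (\<lambda>x. vfield (clip R x)) state_idx L M"
    using lipschitz_field_clipped_vfield[OF R(1)] by blast
  from lipschitz_field.picard_existence[OF this, of x0] obtain X where X0: "X 0 = x0"
    and dX: "\<forall>t\<ge>0. \<forall>j\<in>state_idx.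
      ((\<lambda>s. X s j) has_real_derivative vfield (clip R (X t)) j) (at t within {0..})"
    by blast
  have unclipped: "vfield (clip R (X t)) j = vfield (X t) j"
    if "lyap (X t) \<le> lyap x0 + 1" "j \<in> state_idx" for t j
    using clip_eq_self[OF R(2)[OF that(1)]] by (intro vfield_cong[OF _ that(2)]) auto
  have stays: "lyap (X t) \<le> lyap x0" if "0 \<le> t" for t
  proof (rule sublevel_invariant_halfline[where f="\<lambda>t. lyap (X t)"
        and f'="\<lambda>t. lyap_deriv (X t) (vfield (clip R (X t)))"])
    show "((\<lambda>t. lyap (X t)) has_real_derivative lyap_deriv (X t) (vfield (clip R (X t))))
        (at t within {0..})" if "0 \<le> t" for t
      using dX that by (intro lyap_has_derivative) auto
    show "lyap_deriv (X t) (vfield (clip R (X t))) \<le> 0" if "0 \<le> t" "lyap (X t) \<le> lyap x0 + 1" for t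
      using lyap_deriv_cong[of "vfield (clip R (X t))" "vfield (X t)" "X t"] unclipped[OF that(2)]
        lyap_deriv_vfield_nonpos by simp
  qed (use X0 that in auto)
  have "is_solution X"
    unfolding is_solution_def
  proof (intro allI impI ballI)
    fix t :: real and j assume "0 \<le> t" "j \<in> state_idx"
    moreover have "lyap (X t) \<le> lyap x0 + 1" using stays[OF \<open>0 \<le> t\<close>] by simp
    ultimately have "vfield (clip R (X t)) j = vfield (X t) j" using unclipped by blast
    with dX \<open>0 \<le> t\<close> \<open>j \<in> state_idx\<close>
    show "((\<lambda>s. X s j) has_real_derivative vfield (X t) j) (at t within {0..})" by metis
  qed
  with X0 show ?thesis by blast
qed

end

context compensator
begin

context
  fixes X :: "real \<Rightarrow> nat \<times> nat \<Rightarrow> real"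
  assumes sol: "is_solution X"
begin

lemma solution_has_derivative:
  "0 \<le> t \<Longrightarrow> j \<in> state_idx \<Longrightarrow> ((\<lambda>s. X s j) has_real_derivative vfield (X t) j) (at t within {0..})"
  using sol unfolding is_solution_def by blast

lemma lyap_solution_has_derivative:
  "0 \<le> t \<Longrightarrow> ((\<lambda>s. lyap (X s)) has_real_derivative - mu1 * disagree_energy (X t)) (at t within {0..})"
  using lyap_has_derivative[of X "vfield (X t)" t "{0..}"] solution_has_derivative
  by (simp add: lyap_deriv_vfield)

lemma lyap_solution_antimono: "0 \<le> s \<Longrightarrow> s \<le> t \<Longrightarrow> lyap (X t) \<le> lyap (X s)"
  by (rule nonincreasing_halfline[OF lyap_solution_has_derivative])
    (use mu1_pos in \<open>auto simp: disagree_energy_def intro!: mult_nonneg_nonneg sum_nonneg\<close>)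

lemma solution_bounded: "\<exists>B. \<forall>t\<ge>0. in_box state_idx B (X t)"
proof -
  obtain B where "\<And>x. lyap x \<le> lyap (X 0) \<Longrightarrow> in_box state_idx B x"
    using lyap_sublevel_bounded by blast
  then show ?thesis using lyap_solution_antimono[of 0] by blast
qed

lemma solution_coords_lipschitz:
  "\<exists>M\<ge>0. \<forall>s\<ge>0. \<forall>t\<ge>0. \<forall>j\<in>state_idx. \<bar>X s j - X t j\<bar> \<le> M * \<bar>s - t\<bar>"
proof -
  obtain B where B: "\<And>t. 0 \<le> t \<Longrightarrow> in_box state_idx B (X t)" using solution_bounded by auto
  obtain L1 M1 where "0 \<le> L1" and bounds: "\<And>j x y. j \<in> state_idx \<Longrightarrow> in_box state_idx B x \<Longrightarrow>
      in_box state_idx B y \<Longrightarrow> \<bar>vfield x j\<bar> \<le> M1 \<and> \<bar>vfield x j - vfield y j\<bar> \<le> L1 * (\<Sum>i\<in>state_idx. \<bar>x i - y i\<bar>)"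
    using vfield_box_bounds by blast
  define M where "M = max M1 0"
  have "\<bar>X s j - X t j\<bar> \<le> M * \<bar>s - t\<bar>" if "0 \<le> s" "0 \<le> t" "j \<in> state_idx" for s t j
  proof -
    have "norm (X s j - X t j) \<le> M * norm (s - t)"
    proof (rule field_differentiable_bound[of "{0..}" "\<lambda>s. X s j" "\<lambda>t. vfield (X t) j"])
      fix z :: real assume "z \<in> {0..}"
      then show "((\<lambda>s. X s j) has_field_derivative vfield (X z) j) (at z within {0..})"
        using solution_has_derivative that(3) by simp
      have "\<bar>vfield (X z) j\<bar> \<le> M1"
        using bounds[OF that(3) B B, of z z] \<open>z \<in> {0..}\<close> by auto
      then show "norm (vfield (X z) j) \<le> M" by (simp add: M_def le_max_iff_disj)
    qed (use that in auto)
    then show ?thesis by simp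
  qed
  moreover have "0 \<le> M" by (simp add: M_def)
  ultimately show ?thesis by blast
qed

lemma lipschitz_on_along_solution:
  assumes "box_lipschitz state_idx g"
  obtains K where "K-lipschitz_on {0..} (\<lambda>t. g (X t))"
proof -
  obtain B where B: "\<And>t. 0 \<le> t \<Longrightarrow> in_box state_idx B (X t)" using solution_bounded by auto
  obtain M where "0 \<le> M" and coord: "\<And>s t j. 0 \<le> s \<Longrightarrow> 0 \<le> t \<Longrightarrow> j \<in> state_idx \<Longrightarrow>
      \<bar>X s j - X t j\<bar> \<le> M * \<bar>s - t\<bar>"
    using solution_coords_lipschitz by blast
  have "\<exists>Mg L. 0 \<le> L \<and> (\<forall>x y. in_box state_idx B x \<longrightarrow> in_box state_idx B y \<longrightarrow>
      \<bar>g x\<bar> \<le> Mg \<and> \<bar>g x - g y\<bar> \<le> L * (\<Sum>j\<in>state_idx. \<bar>x j - y j\<bar>))"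
    using assms unfolding box_lipschitz_def by (rule spec)
  then obtain Mg L where "0 \<le> L" and g: "\<forall>x y. in_box state_idx B x \<longrightarrow> in_box state_idx B y \<longrightarrow>
      \<bar>g x\<bar> \<le> Mg \<and> \<bar>g x - g y\<bar> \<le> L * (\<Sum>j\<in>state_idx. \<bar>x j - y j\<bar>)"
    by blast
  have "(L * (card state_idx * M))-lipschitz_on {0..} (\<lambda>t. g (X t))"
  proof (rule lipschitz_onI)
    fix s t :: real assume "s \<in> {0..}" "t \<in> {0..}"
    then have "in_box state_idx B (X s)" "in_box state_idx B (X t)" using B by auto
    with g have "\<bar>g (X s) - g (X t)\<bar> \<le> L * (\<Sum>j\<in>state_idx. \<bar>X s j - X t j\<bar>)"
      by blast
    also have "\<dots> \<le> L * (\<Sum>j\<in>state_idx. M * \<bar>s - t\<bar>)"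
      using coord \<open>s \<in> _\<close> \<open>t \<in> _\<close> by (intro mult_left_mono[OF _ \<open>0 \<le> L\<close>] sum_mono) auto
    finally show "dist (g (X s)) (g (X t)) \<le> L * (card state_idx * M) * dist s t"
      by (simp add: dist_real_def mult_ac)
  qed (use \<open>0 \<le> L\<close> \<open>0 \<le> M\<close> in simp)
  then show thesis by (rule that)
qed

lemma disagree_energy_tendsto_0: "((\<lambda>t. disagree_energy (X t)) \<longlongrightarrow> 0) at_top"
proof -
  have "box_lipschitz state_idx (\<lambda>x. - mu1 * disagree_energy x)"
    unfolding disagree_energy_def power2_eq_square
    by (intro box_lipschitz_cmult box_lipschitz_sum box_lipschitz_mult box_lipschitz_disagree) auto
  then obtain K where "K-lipschitz_on {0..} (\<lambda>t. - mu1 * disagree_energy (X t))"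
    by (rule lipschitz_on_along_solution)
  then have "((\<lambda>t. - mu1 * disagree_energy (X t)) \<longlongrightarrow> 0) at_top"
    by (intro barbalat[OF lyap_solution_has_derivative antimono_tendsto_Inf_halfline]
        lipschitz_on_uniformly_continuous) (auto intro: lyap_solution_antimono lyap_nonneg)
  then have "((\<lambda>t. (- 1 / mu1) * (- mu1 * disagree_energy (X t))) \<longlongrightarrow> (- 1 / mu1) * 0) at_top"
    by (rule tendsto_mult_left)
  then show ?thesis using mu1_pos by simp
qed

lemma disagree_tendsto_0:
  assumes "i \<in> {1..N}" "k \<in> {1..2*l}"
  shows "((\<lambda>t. disagree (X t) i k) \<longlongrightarrow> 0) at_top"
proof (rule tendsto_zero_if_power2, rule Lim_null_comparison[OF always_eventually disagree_energy_tendsto_0],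
    rule allI)
  fix t
  have "(disagree (X t) i k)\<^sup>2 \<le> (\<Sum>i=1..N. (disagree (X t) i k)\<^sup>2)"
    by (rule member_le_sum[OF assms(1)]) auto
  also have "\<dots> \<le> disagree_energy (X t)"
    unfolding disagree_energy_def by (rule member_le_sum[OF assms(2)]) (auto intro: sum_nonneg)
  finally show "norm ((disagree (X t) i k)\<^sup>2) \<le> disagree_energy (X t)" by simp
qed

lemma err_tendsto_0:
  assumes i: "i \<in> {1..N}" and k: "k \<in> {1..2*l}"
  shows "((\<lambda>t. err (X t) k i) \<longlongrightarrow> 0) at_top"
proof -
  obtain B where B: "\<And>t. 0 \<le> t \<Longrightarrow> in_box state_idx B (X t)" using solution_bounded by auto
  obtain c where c: "\<And>y i. i \<in> {1..N} \<Longrightarrow> (y i)\<^sup>2 \<le> c * (- lap_form y y)"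
    using lap_form_coercive by blast
  have err_bounded: "\<bar>err (X t) k j\<bar> \<le> 2 * B" if "0 \<le> t" "j \<in> {1..N}" for t j
  proof -
    have "\<bar>X t (j, k)\<bar> \<le> B" "\<bar>X t (0, k)\<bar> \<le> B"
      using B[OF that(1)] that(2) k by (auto simp: in_box_def state_idx_def)
    then show ?thesis unfolding err_def by linarith
  qed
  have "lap_form (err (X t) k) (err (X t) k) = (\<Sum>j=1..N. err (X t) k j * disagree (X t) j k)" for t
    unfolding lap_form_def by (intro sum.cong refl) (simp add: lap_err)
  moreover have "((\<lambda>t. \<Sum>j=1..N. err (X t) k j * disagree (X t) j k) \<longlongrightarrow> (\<Sum>j=1..N. 0)) at_top"
    using err_bounded k by (intro tendsto_sum tendsto_bounded_mult_zero[of _ "2 * B"] disagree_tendsto_0) auto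
  ultimately have "((\<lambda>t. c * (- lap_form (err (X t) k) (err (X t) k))) \<longlongrightarrow> c * - 0) at_top"
    by (intro tendsto_intros) simp
  then have lim: "((\<lambda>t. c * (- lap_form (err (X t) k) (err (X t) k))) \<longlongrightarrow> 0) at_top"
    by simp
  show ?thesis
  proof (rule tendsto_zero_if_power2, rule Lim_null_comparison[OF always_eventually lim], rule allI)
    show "norm ((err (X t) k i)\<^sup>2) \<le> c * (- lap_form (err (X t) k) (err (X t) k))" for t
      using c[OF i] by simp
  qed
qed

lemma err_vfield_tendsto_0:
  assumes "i \<in> {1..N}" "k \<in> {1..2*l}"
  shows "((\<lambda>t. vfield (X t) (i, k) - vfield (X t) (0, k)) \<longlongrightarrow> 0) at_top"
proof -
  have idx: "(i, k) \<in> state_idx" "(0, k) \<in> state_idx" using assms by (auto simp: state_idx_def)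
  then have "box_lipschitz state_idx (\<lambda>x. vfield x (i, k) - vfield x (0, k))"
    by (intro box_lipschitz_diff box_lipschitz_vfield)
  then obtain K where "K-lipschitz_on {0..} (\<lambda>t. vfield (X t) (i, k) - vfield (X t) (0, k))"
    by (rule lipschitz_on_along_solution)
  moreover have "((\<lambda>t. err (X t) k i) has_real_derivative vfield (X t) (i, k) - vfield (X t) (0, k))
      (at t within {0..})" if "0 \<le> t" for t
    unfolding err_def using idx that by (intro DERIV_diff solution_has_derivative)
  ultimately show ?thesis
    by (intro barbalat[OF _ err_tendsto_0[OF assms]] lipschitz_on_uniformly_continuous) auto
qed

lemma gain_vfield_tendsto_0:
  assumes "i \<in> {1..N}" "q \<in> {1..l}"
  shows "((\<lambda>t. vfield (X t) (N + i, q)) \<longlongrightarrow> 0) at_top"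
proof -
  obtain B where B: "\<And>t. 0 \<le> t \<Longrightarrow> in_box state_idx B (X t)" using solution_bounded by auto
  have "\<bar>X t (i, k)\<bar> \<le> B" if "0 \<le> t" "k \<in> {1..2*l}" for t k
    using B[OF that(1)] that(2) assms(1) by (auto simp: in_box_def state_idx_def)
  moreover have "2*q-1 \<in> {1..2*l}" "2*q \<in> {1..2*l}" using assms(2) by auto
  ultimately have "((\<lambda>t. mu2 * (X t (i, 2*q) * disagree (X t) i (2*q-1)
      - X t (i, 2*q-1) * disagree (X t) i (2*q))) \<longlongrightarrow> mu2 * (0 - 0)) at_top"
    by (intro tendsto_intros tendsto_bounded_mult_zero[of _ B] disagree_tendsto_0[OF assms(1)]) auto
  then show ?thesis by (simp add: vfield_components(5)[OF assms(2,1)] mult.commute)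
qed

end

end

context compensator
begin

lemma mulv_Smat_gain_err_eq:
  assumes "i \<in> {1..N}" "k \<in> {1..2*l}"
  shows "mulv (Smat (\<lambda>q. x (N+i, q) - w q)) (2*l) (\<lambda>q. x (i, q)) k
    = (vfield x (i, k) - vfield x (0, k)) - mu1 * disagree x i k
      - (if odd k then w ((k+1) div 2) else - w (k div 2)) * err x (if odd k then k+1 else k-1) i"
  unfolding vfield_follower[OF assms(1)] vfield_leader mulv_Smat[OF assms(2)]
  by (cases "odd k") (simp_all add: err_def algebra_simps)

lemma Smat_gain_err_tendsto_0:
  assumes "is_solution X" "i \<in> {1..N}" "k \<in> {1..2*l}"
  shows "((\<lambda>t. mulv (Smat (\<lambda>q. X t (N+i, q) - w q)) (2*l) (\<lambda>q. X t (i, q)) k) \<longlongrightarrow> 0) at_top"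
proof -
  have "(if odd k then k+1 else k-1) \<in> {1..2*l}" using assms(3) by (cases "odd k") (auto; presburger)+
  then have "((\<lambda>t. (vfield (X t) (i, k) - vfield (X t) (0, k)) - mu1 * disagree (X t) i k
      - (if odd k then w ((k+1) div 2) else - w (k div 2)) * err (X t) (if odd k then k+1 else k-1) i)
      \<longlongrightarrow> 0 - mu1 * 0 - (if odd k then w ((k+1) div 2) else - w (k div 2)) * 0) at_top"
    by (intro tendsto_intros err_vfield_tendsto_0 disagree_tendsto_0 err_tendsto_0 assms)
  then show ?thesis by (simp add: mulv_Smat_gain_err_eq[OF assms(2,3)])
qed

definition pack_state :: "(real \<Rightarrow> nat \<Rightarrow> real) \<Rightarrow> (nat \<Rightarrow> real \<Rightarrow> nat \<Rightarrow> real)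
    \<Rightarrow> (nat \<Rightarrow> real \<Rightarrow> nat \<Rightarrow> real) \<Rightarrow> real \<Rightarrow> nat \<times> nat \<Rightarrow> real" where
  "pack_state v eta om t p = (if fst p = 0 then v t (snd p)
     else if fst p \<le> N then eta (fst p) t (snd p) else om (fst p - N) t (snd p))"

lemma pack_state_components:
  shows "(\<lambda>q. pack_state v eta om t (0, q)) = v t"
    and "i \<in> {1..N} \<Longrightarrow> (\<lambda>q. pack_state v eta om t (i, q)) = eta i t"
    and "i \<in> {1..N} \<Longrightarrow> (\<lambda>q. pack_state v eta om t (N + i, q)) = om i t"
  by (auto simp: pack_state_def fun_eq_iff)

lemma disagree_pack_state:
  assumes "i \<in> {1..N}"
  shows "disagree (pack_state v eta om t) i
    = (\<lambda>k. \<Sum>j\<in>nbrs E N i. (if j = 0 then v t else eta j t) k - eta i t k)"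
proof -
  have "j \<le> N" if "j \<in> nbrs E N i" for j using nbrs_subset that by fastforce
  then show ?thesis
    unfolding disagree_def fun_eq_iff using assms by (auto intro!: sum.cong simp: pack_state_def)
qed

lemma ball_state_idx_iff:
  "(\<forall>p\<in>state_idx. P p) \<longleftrightarrow> (\<forall>k\<in>{1..2*l}. P (0, k)) \<and> (\<forall>i\<in>{1..N}. \<forall>k\<in>{1..2*l}. P (i, k))
     \<and> (\<forall>i\<in>{1..N}. \<forall>q\<in>{1..l}. P (N + i, q))"
  (is "?lhs \<longleftrightarrow> ?rhs")
proof
  assume ?rhs
  show ?lhs
  proof
    fix p assume "p \<in> state_idx"
    then show "P p" using \<open>?rhs\<close> by (cases rule: state_idx_cases) auto
  qed
qed (auto simp: state_idx_def)

lemma closed_loop_iff_is_solution: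
  "closed_loop N l E w mu1 mu2 v eta om \<longleftrightarrow> is_solution (pack_state v eta om)"
proof -
  have leader: "(\<lambda>s. pack_state v eta om s (0, k)) = (\<lambda>s. v s k)" for k
    by (simp add: pack_state_def)
  have follower: "(\<lambda>s. pack_state v eta om s (i, k)) = (\<lambda>s. eta i s k)"
      "(\<lambda>s. pack_state v eta om s (N + i, k)) = (\<lambda>s. om i s k)" if "i \<in> {1..N}" for i k
    using that by (auto simp: pack_state_def)
  show ?thesis
    unfolding closed_loop_def Let_def is_solution_def ball_state_idx_iff
    by (auto simp: leader follower vfield_leader vfield_follower vfield_gain pack_state_components
        disagree_pack_state)
qed

lemma closed_loop_exists:
  "\<exists>v eta om. (\<forall>k\<in>{1..2*l}. v 0 k = v0 k) \<and> (\<forall>i\<in>{1..N}. \<forall>k\<in>{1..2*l}. eta i 0 k = eta0 i k) \<and>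
     (\<forall>i\<in>{1..N}. \<forall>k\<in>{1..l}. om i 0 k = om0 i k) \<and> closed_loop N l E w mu1 mu2 v eta om"
proof -
  obtain X where X0: "X 0 = pack_state (\<lambda>_. v0) (\<lambda>i _. eta0 i) (\<lambda>i _. om0 i) 0" and "is_solution X"
    using solution_exists by blast
  define v eta om where "v t k = X t (0, k)" and "eta i t k = X t (i, k)" and "om i t k = X t (N + i, k)"
    for i t k
  have "pack_state v eta om = X" by (auto simp: pack_state_def v_def eta_def om_def fun_eq_iff)
  then have "closed_loop N l E w mu1 mu2 v eta om"
    using \<open>is_solution X\<close> closed_loop_iff_is_solution by simp
  moreover have "v 0 k = v0 k" "i \<in> {1..N} \<Longrightarrow> eta i 0 k = eta0 i k" "i \<in> {1..N} \<Longrightarrow> om i 0 k = om0 i k"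
    for i k by (simp_all add: X0 v_def eta_def om_def pack_state_def)
  ultimately show ?thesis by blast
qed

lemma deriv_tendsto_of_solution:
  assumes "is_solution X" "j \<in> state_idx" "((\<lambda>t. vfield (X t) j) \<longlongrightarrow> 0) at_top"
  shows "((\<lambda>t. deriv (\<lambda>s. X s j - c) t) \<longlongrightarrow> 0) at_top"
proof -
  have deriv_eq: "deriv (\<lambda>s. X s j - c) t = vfield (X t) j" if "1 \<le> t" for t
  proof -
    have "at t within {0..} = at t" using that by (intro at_within_interior) auto
    moreover have "((\<lambda>s. X s j) has_real_derivative vfield (X t) j) (at t within {0..})"
      using solution_has_derivative[OF assms(1)] assms(2) that by simp
    ultimately have "((\<lambda>s. X s j - c) has_real_derivative vfield (X t) j - 0) (at t)"
      by (intro DERIV_diff DERIV_const) simp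
    then show ?thesis by (simp add: DERIV_imp_deriv)
  qed
  have "\<forall>\<^sub>F t in at_top. vfield (X t) j = deriv (\<lambda>s. X s j - c) t"
    unfolding eventually_at_top_linorder by (auto intro!: exI[of _ 1] simp: deriv_eq)
  then show ?thesis using Lim_transform_eventually[OF assms(3)] by blast
qed

lemma closed_loop_asymptotics:
  assumes "closed_loop N l E w mu1 mu2 v eta om"
  shows "(\<exists>B. \<forall>t\<ge>0. (\<forall>i\<in>{1..N}. \<forall>k\<in>{1..2*l}. \<bar>eta i t k\<bar> \<le> B) \<and>
                     (\<forall>i\<in>{1..N}. \<forall>k\<in>{1..l}. \<bar>om i t k\<bar> \<le> B)) \<and>
        (\<forall>i\<in>{1..N}. \<forall>k\<in>{1..2*l}. ((\<lambda>t. eta i t k - v t k) \<longlongrightarrow> 0) at_top) \<and>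
        (\<forall>i\<in>{1..N}. \<forall>k\<in>{1..l}. ((\<lambda>t. deriv (\<lambda>s. om i s k - w k) t) \<longlongrightarrow> 0) at_top) \<and>
        (\<forall>i\<in>{1..N}. \<forall>k\<in>{1..2*l}.
           ((\<lambda>t. mulv (Smat (\<lambda>q. om i t q - w q)) (2*l) (eta i t) k) \<longlongrightarrow> 0) at_top)"
proof -
  define X where "X = pack_state v eta om"
  have sol: "is_solution X" using assms closed_loop_iff_is_solution by (simp add: X_def)
  have X: "X t (0, k) = v t k" "i \<in> {1..N} \<Longrightarrow> X t (i, k) = eta i t k"
    "i \<in> {1..N} \<Longrightarrow> X t (N + i, k) = om i t k" for i t k
    by (simp_all add: X_def pack_state_def)
  obtain B where "\<forall>t\<ge>0. in_box state_idx B (X t)" using solution_bounded[OF sol] by blast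
  then have "\<forall>t\<ge>0. (\<forall>i\<in>{1..N}. \<forall>k\<in>{1..2*l}. \<bar>eta i t k\<bar> \<le> B) \<and> (\<forall>i\<in>{1..N}. \<forall>k\<in>{1..l}. \<bar>om i t k\<bar> \<le> B)"
    by (auto simp: in_box_def ball_state_idx_iff X)
  moreover have "((\<lambda>t. eta i t k - v t k) \<longlongrightarrow> 0) at_top" if "i \<in> {1..N}" "k \<in> {1..2*l}" for i k
    using err_tendsto_0[OF sol that] that by (simp add: err_def X)
  moreover have "((\<lambda>t. deriv (\<lambda>s. om i s k - w k) t) \<longlongrightarrow> 0) at_top" if "i \<in> {1..N}" "k \<in> {1..l}" for i k
    using deriv_tendsto_of_solution[OF sol _ gain_vfield_tendsto_0[OF sol that], of "w k"] that
    by (simp add: X state_idx_def)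
  moreover have "((\<lambda>t. mulv (Smat (\<lambda>q. om i t q - w q)) (2*l) (eta i t) k) \<longlongrightarrow> 0) at_top"
    if "i \<in> {1..N}" "k \<in> {1..2*l}" for i k
    using Smat_gain_err_tendsto_0[OF sol that] that by (simp add: X_def pack_state_def)
  ultimately show ?thesis by blast
qed

end

theorem lemma1:
  fixes N l :: nat and E :: "(nat \<times> nat) set" and w :: "nat \<Rightarrow> real"
  assumes "N \<ge> 1" and "l \<ge> 1"
    and "\<forall>k\<in>{1..l}. w k > 0"
    and "E \<subseteq> {0..N} \<times> {0..N}"
    and "contains_spanning_tree E {0..N} 0"
    and "\<forall>i\<in>{1..N}. \<forall>j\<in>{1..N}. (i, j) \<in> E \<longleftrightarrow> (j, i) \<in> E"
  shows "\<forall>(v0 :: nat \<Rightarrow> real) (eta0 :: nat \<Rightarrow> nat \<Rightarrow> real) (om0 :: nat \<Rightarrow> nat \<Rightarrow> real) mu1 mu2.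
     mu1 > 0 \<longrightarrow> mu2 > 0 \<longrightarrow>
     (\<exists>v eta om.
        (\<forall>k\<in>{1..2*l}. v 0 k = v0 k) \<and>
        (\<forall>i\<in>{1..N}. \<forall>k\<in>{1..2*l}. eta i 0 k = eta0 i k) \<and>
        (\<forall>i\<in>{1..N}. \<forall>k\<in>{1..l}. om i 0 k = om0 i k) \<and>
        closed_loop N l E w mu1 mu2 v eta om) \<and>
     (\<forall>v eta om.
        (\<forall>k\<in>{1..2*l}. v 0 k = v0 k) \<and>
        (\<forall>i\<in>{1..N}. \<forall>k\<in>{1..2*l}. eta i 0 k = eta0 i k) \<and>
        (\<forall>i\<in>{1..N}. \<forall>k\<in>{1..l}. om i 0 k = om0 i k) \<and>
        closed_loop N l E w mu1 mu2 v eta om \<longrightarrow>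
        (\<exists>B. \<forall>t\<ge>0. (\<forall>i\<in>{1..N}. \<forall>k\<in>{1..2*l}. \<bar>eta i t k\<bar> \<le> B) \<and>
                     (\<forall>i\<in>{1..N}. \<forall>k\<in>{1..l}. \<bar>om i t k\<bar> \<le> B)) \<and>
        (\<forall>i\<in>{1..N}. \<forall>k\<in>{1..2*l}. ((\<lambda>t. eta i t k - v t k) \<longlongrightarrow> 0) at_top) \<and>
        (\<forall>i\<in>{1..N}. \<forall>k\<in>{1..l}.
           ((\<lambda>t. deriv (\<lambda>s. om i s k - w k) t) \<longlongrightarrow> 0) at_top) \<and>
        (\<forall>i\<in>{1..N}. \<forall>k\<in>{1..2*l}.
           ((\<lambda>t. mulv (Smat (\<lambda>q. om i t q - w q)) (2*l) (eta i t) k) \<longlongrightarrow> 0) at_top))"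
proof -
  have loc: "compensator N E mu1 mu2" if "0 < mu1" "0 < mu2" for mu1 mu2
    using assms that by unfold_locales auto
  show ?thesis
    by (intro allI impI conjI)
      (blast intro: compensator.closed_loop_exists[OF loc] dest: compensator.closed_loop_asymptotics[OF loc])+
qed

end
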